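(* Let $R$ be a local ring, let $p(X)=\sum_{i=0}^na_iX^i\in R[X]$ be such that $p(X)/1$ is a strong divisor of the local ring $R(X)$ that is not a unit, and let $I=(a_0,\ldots,a_n)$ be the content ideal of $p(X)$. Then $I(X):=IR(X)=R(X)p(X)/1$, and $I=R\rho$ for some strong divisor $\rho$ of $R$ such that $p(X)/1\simeq\rho$ in $R(X)$. If $p(X)/1\in R(X)a_i$ for some $i$, then $I=Ra_i$. Moreover, the image of $\mathrm{Spec}(R(X)_{p(X)/1})\to\mathrm{Spec}(R)$ is $\mathrm D(I)$.
   Context: All rings are commutative with identity; "local" means having a unique maximal ideal. For a ring $A$, $A(X):=A[X]_{\Sigma_A}$ with $\Sigma_A=\{q\in A[X]: c(q)=A\}$, $c(q)$ the ideal generated by the coefficients; if $A$ is local, so is $A(X)$. A strong divisor of a local ring $A$ is a regular element $t$ such that $At$ is comparable under inclusion with every ideal of $A$. Two elements $x,y$ of a ring $B$ are equivalent, written $x\simeq y$, if $\mathrm D(x)=\mathrm D(y)$ in $\mathrm{Spec}(B)$ (equivalently $\sqrt{Bx}=\sqrt{By}$). $\mathrm D(I)=\{P\in\mathrm{Spec}(R): I\not\subseteq P\}$. *)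

theory Defs
  imports "HOL-Algebra.Algebra"
begin

definition local_ring :: "('a, 'm) ring_scheme \<Rightarrow> bool" where
  "local_ring A \<longleftrightarrow> cring A \<and> (\<exists>!M. maximalideal M A)"

definition regular_elem :: "('a, 'm) ring_scheme \<Rightarrow> 'a \<Rightarrow> bool" where
  "regular_elem A t \<longleftrightarrow> t \<in> carrier A \<and>
     (\<forall>x \<in> carrier A. t \<otimes>\<^bsub>A\<^esub> x = \<zero>\<^bsub>A\<^esub> \<longrightarrow> x = \<zero>\<^bsub>A\<^esub>)"

definition strong_divisor :: "('a, 'm) ring_scheme \<Rightarrow> 'a \<Rightarrow> bool" where
  "strong_divisor A t \<longleftrightarrow> regular_elem A t \<and>
     (\<forall>J. ideal J A \<longrightarrow> PIdl\<^bsub>A\<^esub> t \<subseteq> J \<or> J \<subseteq> PIdl\<^bsub>A\<^esub> t)"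

definition Spec :: "('a, 'm) ring_scheme \<Rightarrow> 'a set set" where
  "Spec A = {P. primeideal P A}"

definition D_set :: "('a, 'm) ring_scheme \<Rightarrow> 'a set \<Rightarrow> 'a set set" where
  "D_set A I = {P \<in> Spec A. \<not> I \<subseteq> P}"

definition D_elem :: "('a, 'm) ring_scheme \<Rightarrow> 'a \<Rightarrow> 'a set set" where
  "D_elem A x = D_set A {x}"

definition equiv_elem :: "('a, 'm) ring_scheme \<Rightarrow> 'a \<Rightarrow> 'a \<Rightarrow> bool" where
  "equiv_elem A x y \<longleftrightarrow> D_elem A x = D_elem A y"

definition loc_rel :: "('a, 'm) ring_scheme \<Rightarrow> 'a set \<Rightarrow> (('a \<times> 'a) \<times> ('a \<times> 'a)) set" where
  "loc_rel B S = {((a, s), (b, t)). a \<in> carrier B \<and> s \<in> S \<and> b \<in> carrier B \<and> t \<in> S \<and>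
      (\<exists>u \<in> S. u \<otimes>\<^bsub>B\<^esub> ((a \<otimes>\<^bsub>B\<^esub> t) \<ominus>\<^bsub>B\<^esub> (b \<otimes>\<^bsub>B\<^esub> s)) = \<zero>\<^bsub>B\<^esub>)}"

definition loc_frac :: "('a, 'm) ring_scheme \<Rightarrow> 'a set \<Rightarrow> 'a \<Rightarrow> 'a \<Rightarrow> ('a \<times> 'a) set" where
  "loc_frac B S a s = loc_rel B S `` {(a, s)}"

definition loc_mult :: "('a, 'm) ring_scheme \<Rightarrow> 'a set \<Rightarrow> ('a \<times> 'a) set \<Rightarrow> ('a \<times> 'a) set \<Rightarrow> ('a \<times> 'a) set" where
  "loc_mult B S U V = \<Union>{loc_frac B S (a \<otimes>\<^bsub>B\<^esub> b) (s \<otimes>\<^bsub>B\<^esub> t) | a s b t. (a, s) \<in> U \<and> (b, t) \<in> V}"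

definition loc_add :: "('a, 'm) ring_scheme \<Rightarrow> 'a set \<Rightarrow> ('a \<times> 'a) set \<Rightarrow> ('a \<times> 'a) set \<Rightarrow> ('a \<times> 'a) set" where
  "loc_add B S U V = \<Union>{loc_frac B S ((a \<otimes>\<^bsub>B\<^esub> t) \<oplus>\<^bsub>B\<^esub> (b \<otimes>\<^bsub>B\<^esub> s)) (s \<otimes>\<^bsub>B\<^esub> t)
                        | a s b t. (a, s) \<in> U \<and> (b, t) \<in> V}"

definition localization :: "('a, 'm) ring_scheme \<Rightarrow> 'a set \<Rightarrow> ('a \<times> 'a) set ring" where
  "localization B S =
     \<lparr> carrier = {loc_frac B S a s | a s. a \<in> carrier B \<and> s \<in> S},
       monoid.mult = loc_mult B S,
       one = loc_frac B S (\<one>\<^bsub>B\<^esub>) (\<one>\<^bsub>B\<^esub>),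
       ring.zero = loc_frac B S (\<zero>\<^bsub>B\<^esub>) (\<one>\<^bsub>B\<^esub>),
       ring.add = loc_add B S \<rparr>"

definition loc_map :: "('a, 'm) ring_scheme \<Rightarrow> 'a set \<Rightarrow> 'a \<Rightarrow> ('a \<times> 'a) set" where
  "loc_map B S b = loc_frac B S b (\<one>\<^bsub>B\<^esub>)"

definition content_ideal :: "('a, 'm) ring_scheme \<Rightarrow> (nat \<Rightarrow> 'a) \<Rightarrow> 'a set" where
  "content_ideal R q = Idl\<^bsub>R\<^esub> {q i | i. i \<le> deg R q}"

definition Sigma_set :: "('a, 'm) ring_scheme \<Rightarrow> (nat \<Rightarrow> 'a) set" where
  "Sigma_set R = {q \<in> carrier (UP R). content_ideal R q = carrier R}"

definition nagata :: "('a, 'm) ring_scheme \<Rightarrow> ((nat \<Rightarrow> 'a) \<times> (nat \<Rightarrow> 'a)) set ring" where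
  "nagata R = localization (UP R) (Sigma_set R)"

definition nagata_map :: "('a, 'm) ring_scheme \<Rightarrow> (nat \<Rightarrow> 'a) \<Rightarrow> ((nat \<Rightarrow> 'a) \<times> (nat \<Rightarrow> 'a)) set" where
  "nagata_map R q = loc_map (UP R) (Sigma_set R) q"

definition nagata_const :: "('a, 'm) ring_scheme \<Rightarrow> 'a \<Rightarrow> ((nat \<Rightarrow> 'a) \<times> (nat \<Rightarrow> 'a)) set" where
  "nagata_const R a = nagata_map R (monom (UP R) a 0)"

definition loc_elem :: "('a, 'm) ring_scheme \<Rightarrow> 'a \<Rightarrow> ('a \<times> 'a) set ring" where
  "loc_elem B x = localization B {x [^]\<^bsub>B\<^esub> (n::nat) | n. True}"

definition loc_elem_map :: "('a, 'm) ring_scheme \<Rightarrow> 'a \<Rightarrow> 'a \<Rightarrow> ('a \<times> 'a) set" where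
  "loc_elem_map B x = loc_map B {x [^]\<^bsub>B\<^esub> (n::nat) | n. True}"

end

theory Submission
  imports Defs
begin

text \<open>
  The strong divisor \<open>P = p/1\<close> of \<open>R(X)\<close> is comparable with each principal ideal generated by a
  coefficient \<open>a\<^sub>i/1\<close>. If it divided none of them, every \<open>a\<^sub>i/1\<close> would be a multiple \<open>v\<^sub>i P\<close>,
  and \<open>p = \<Sum> a\<^sub>i X\<^sup>i\<close> with \<open>P\<close> regular would give \<open>\<Sum> v\<^sub>i X\<^sup>i = 1\<close>, forcing some \<open>v\<^sub>i\<close> to be a unit.
  So \<open>P = y a\<^sub>k/1\<close> for some \<open>k\<close>; clearing denominators gives \<open>t p = a\<^sub>k h\<close> in \<open>R[X]\<close> with \<open>t\<close> of unit
  content. Over the local ring \<open>R\<close> the coefficients of \<open>t p\<close> form a triangular system in those of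
  \<open>p\<close> with unit diagonal, so all \<open>a\<^sub>i\<close> lie in \<open>R a\<^sub>k\<close>, i.e. \<open>I = R a\<^sub>k\<close>; and \<open>y\<close> is a unit, since
  otherwise Nakayama gives \<open>a\<^sub>k = 0\<close>. Thus \<open>P\<close> and \<open>\<rho>/1\<close> with \<open>\<rho> = a\<^sub>k\<close> generate the same ideal of
  \<open>R(X)\<close>. The remaining claims follow because \<open>J \<mapsto> J(X)\<close> is injective on ideals of \<open>R\<close>, and because
  a prime \<open>q\<close> of \<open>R\<close> avoiding \<open>\<rho>\<close> extends to the prime \<open>q(X)\<close> of \<open>R(X)\<close>, which avoids \<open>P\<close> and
  hence survives in \<open>R(X)\<^sub>P\<close>.
\<close>

lemma (in cring) cring_idealI:
  assumes "I \<subseteq> carrier R" "\<zero> \<in> I" "\<And>a b. \<lbrakk>a \<in> I; b \<in> I\<rbrakk> \<Longrightarrow> a \<oplus> b \<in> I"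
    and "\<And>a x. \<lbrakk>a \<in> I; x \<in> carrier R\<rbrakk> \<Longrightarrow> x \<otimes> a \<in> I"
  shows "ideal I R"
proof (rule idealI[OF ring_axioms])
  show "subgroup I (add_monoid R)"
  proof (rule subgroup.intro)
    fix a assume a: "a \<in> I"
    then have "inv\<^bsub>add_monoid R\<^esub> a = (\<ominus> \<one>) \<otimes> a"
      using assms(1) by (auto simp: a_inv_def[symmetric] l_minus)
    then show "inv\<^bsub>add_monoid R\<^esub> a \<in> I" using assms(4)[OF a] by simp
  qed (use assms in auto)
next
  fix a x assume "a \<in> I" "x \<in> carrier R"
  then show "x \<otimes> a \<in> I" and "a \<otimes> x \<in> I"
    using assms(1,4) m_comm[of a x] by auto
qed

lemma (in ideal) I_finsum_closed:
  assumes "finite A" "\<And>i. i \<in> A \<Longrightarrow> f i \<in> I"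
  shows "finsum R f A \<in> I"
  using assms
proof (induction A rule: finite_induct)
  case (insert x F)
  then have "f \<in> F \<rightarrow> carrier R" "f x \<in> carrier R" using Icarr by auto
  then show ?case using insert by (simp add: finsum_insert a_closed)
qed simp

lemma (in ideal) I_minus_closed: "\<lbrakk>a \<in> I; b \<in> I\<rbrakk> \<Longrightarrow> a \<ominus>\<^bsub>R\<^esub> b \<in> I"
  by (simp add: minus_eq a_closed a_inv_closed)

lemma (in ideal) I_Units_cancel:
  assumes "u \<in> Units R" "x \<in> carrier R" "u \<otimes> x \<in> I"
  shows "x \<in> I"
proof -
  have u: "u \<in> carrier R" "inv u \<in> carrier R" using assms(1) by auto
  have "inv u \<otimes> (u \<otimes> x) \<in> I" by (rule I_l_closed[OF assms(3) u(2)])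
  also have "inv u \<otimes> (u \<otimes> x) = x" using assms u by (simp add: m_assoc[symmetric])
  finally show ?thesis .
qed

lemma (in ideal) Units_imp_carrier: "\<lbrakk>u \<in> Units R; u \<in> I\<rbrakk> \<Longrightarrow> I = carrier R"
  using I_Units_cancel[of u \<one>] one_imp_carrier by simp

lemma (in ideal) I_Units_last_summand:
  fixes n :: nat
  assumes "(\<Oplus>i \<in> {..Suc n}. a i \<otimes> x i) \<in> I" "\<forall>i\<le>n. x i \<in> I" "a (Suc n) \<in> Units R"
    and "\<forall>i\<le>Suc n. a i \<in> carrier R \<and> x i \<in> carrier R"
  shows "x (Suc n) \<in> I"
proof (rule I_Units_cancel[OF assms(3)])
  show "x (Suc n) \<in> carrier R" using assms(4) by auto
  have "a (Suc n) \<otimes> x (Suc n) = (\<Oplus>i \<in> {..Suc n}. a i \<otimes> x i) \<ominus> (\<Oplus>i \<in> {..n}. a i \<otimes> x i)"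
    using assms(4) by (simp add: Pi_def minus_eq a_assoc r_neg)
  also have "\<dots> \<in> I"
  proof (rule I_minus_closed[OF assms(1)])
    show "(\<Oplus>i \<in> {..n}. a i \<otimes> x i) \<in> I"
      using assms(2,4) by (intro I_finsum_closed) (auto intro: I_l_closed)
  qed
  finally show "a (Suc n) \<otimes> x (Suc n) \<in> I" .
qed

lemma (in cring) ideal_mult_left:
  assumes "ideal J R" "a \<in> carrier R"
  shows "ideal {a \<otimes> r | r. r \<in> J} R"
proof -
  interpret J: ideal J R by fact
  show ?thesis
  proof (rule cring_idealI)
    show "\<zero> \<in> {a \<otimes> r | r. r \<in> J}" using assms(2) by (auto intro!: exI[of _ \<zero>])
  next
    fix x y assume "x \<in> {a \<otimes> r | r. r \<in> J}" "y \<in> {a \<otimes> r | r. r \<in> J}"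
    then obtain r s where "x = a \<otimes> r" "y = a \<otimes> s" "r \<in> J" "s \<in> J" by blast
    then show "x \<oplus> y \<in> {a \<otimes> r | r. r \<in> J}"
      using assms(2) by (auto simp: r_distr intro!: exI[of _ "r \<oplus> s"] J.a_closed)
  next
    fix x y assume "x \<in> {a \<otimes> r | r. r \<in> J}" "y \<in> carrier R"
    then obtain r where "x = a \<otimes> r" "r \<in> J" by blast
    then show "y \<otimes> x \<in> {a \<otimes> r | r. r \<in> J}"
      using assms(2) \<open>y \<in> carrier R\<close>
      by (auto simp: m_lcomm intro!: exI[of _ "y \<otimes> r"] J.I_l_closed)
  qed (use assms(2) J.Icarr in auto)
qed

lemma (in cring) primeideal_nat_pow_notin:
  assumes "primeideal Q R" "x \<in> carrier R" "x \<notin> Q"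
  shows "x [^] (n::nat) \<notin> Q"
proof (induction n)
  case 0
  show ?case
    using ideal.one_imp_carrier[OF primeideal.axioms(1)[OF assms(1)]]
      primeideal.I_notcarr[OF assms(1)] by auto
next
  case (Suc n)
  then have "x [^] n \<otimes> x \<notin> Q"
    using primeideal.I_prime[OF assms(1)] assms(2,3) nat_pow_closed by blast
  then show ?case by simp
qed

lemma (in cring) ideal_Union_chain:
  assumes "C \<noteq> {}" "subset.chain {J. ideal J R} C"
  shows "ideal (\<Union>C) R"
proof (rule cring_idealI)
  have ideals: "\<And>J. J \<in> C \<Longrightarrow> ideal J R" using assms(2) unfolding subset_chain_def by auto
  show "\<Union>C \<subseteq> carrier R" using ideal.Icarr[OF ideals] by blast
  obtain J where "J \<in> C" using assms(1) by blast
  then show "\<zero> \<in> \<Union>C" using additive_subgroup.zero_closed[OF ideal.axioms(1)[OF ideals]] by blast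
next
  fix a b assume "a \<in> \<Union>C" "b \<in> \<Union>C"
  then obtain J K where "J \<in> C" "K \<in> C" "a \<in> J" "b \<in> K" by blast
  moreover have "J \<subseteq> K \<or> K \<subseteq> J" using assms(2) \<open>J \<in> C\<close> \<open>K \<in> C\<close>
    unfolding subset_chain_def by blast
  ultimately obtain L where L: "L \<in> C" "a \<in> L" "b \<in> L" by blast
  then have "a \<oplus> b \<in> L"
    using assms(2) unfolding subset_chain_def by (auto intro: additive_subgroup.a_closed[OF ideal.axioms(1)])
  then show "a \<oplus> b \<in> \<Union>C" using L(1) by blast
next
  fix a x assume "a \<in> \<Union>C" "x \<in> carrier R"
  then obtain J where "J \<in> C" "a \<in> J" by blast
  then have "x \<otimes> a \<in> J"
    using assms(2) \<open>x \<in> carrier R\<close> unfolding subset_chain_def by (auto intro: ideal.I_l_closed)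
  then show "x \<otimes> a \<in> \<Union>C" using \<open>J \<in> C\<close> by blast
qed

lemma (in cring) exists_maximalideal_superset:
  assumes "ideal I R" "I \<noteq> carrier R"
  obtains M where "maximalideal M R" "I \<subseteq> M"
proof -
  define A where "A = {J. ideal J R \<and> I \<subseteq> J \<and> \<one> \<notin> J}"
  have "\<exists>M\<in>A. \<forall>J\<in>A. M \<subseteq> J \<longrightarrow> J = M"
  proof (rule subset_Zorn_nonempty)
    have "\<one> \<notin> I" using assms ideal.one_imp_carrier by blast
    then show "A \<noteq> {}" using assms(1) unfolding A_def by blast
    fix C assume C: "C \<noteq> {}" "subset.chain A C"
    have CA: "C \<subseteq> A" and chain: "subset.chain {J. ideal J R} C"
      using C(2) unfolding subset_chain_def A_def by auto
    have "ideal (\<Union>C) R" by (rule ideal_Union_chain[OF C(1) chain])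
    moreover have "I \<subseteq> \<Union>C" using C(1) CA unfolding A_def by blast
    moreover have "\<one> \<notin> \<Union>C" using CA unfolding A_def by blast
    ultimately show "\<Union>C \<in> A" unfolding A_def by blast
  qed
  then obtain M where M: "M \<in> A" "\<And>J. J \<in> A \<Longrightarrow> M \<subseteq> J \<Longrightarrow> J = M" by blast
  have "maximalideal M R"
  proof (rule maximalidealI)
    show "ideal M R" "carrier R \<noteq> M" using M(1) unfolding A_def by auto
    fix J assume J: "ideal J R" "M \<subseteq> J" "J \<subseteq> carrier R"
    show "J = M \<or> J = carrier R"
    proof (cases "\<one> \<in> J")
      case True
      then show ?thesis using ideal.one_imp_carrier[OF J(1)] by simp
    next
      case False
      then have "J \<in> A" using J M(1) unfolding A_def by auto
      then show ?thesis using M(2) J(2) by simp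
    qed
  qed
  then show ?thesis using that M(1) unfolding A_def by blast
qed

lemma (in cring) cgenideal_Units_mult:
  assumes "w \<in> Units R" "x \<in> carrier R"
  shows "PIdl (w \<otimes> x) = PIdl x"
proof
  have wx: "w \<otimes> x \<in> carrier R" using assms by (simp add: Units_closed)
  have "w \<otimes> x \<in> PIdl x"
    using assms by (intro ideal.I_l_closed[OF cgenideal_ideal cgenideal_self]) (simp_all add: Units_closed)
  then show "PIdl (w \<otimes> x) \<subseteq> PIdl x" by (rule cgenideal_minimal[OF cgenideal_ideal[OF assms(2)]])
  have "inv w \<otimes> (w \<otimes> x) \<in> PIdl (w \<otimes> x)"
    using assms by (intro ideal.I_l_closed[OF cgenideal_ideal[OF wx] cgenideal_self[OF wx]]) (simp add: Units_inv_closed)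
  moreover have "inv w \<otimes> (w \<otimes> x) = x" using assms by (simp add: m_assoc[symmetric] Units_closed)
  ultimately have "x \<in> PIdl (w \<otimes> x)" by simp
  then show "PIdl x \<subseteq> PIdl (w \<otimes> x)" by (rule cgenideal_minimal[OF cgenideal_ideal[OF wx]])
qed

lemma (in cring) cgenideal_subset_iff: "\<lbrakk>ideal J R; x \<in> carrier R\<rbrakk> \<Longrightarrow> PIdl x \<subseteq> J \<longleftrightarrow> x \<in> J"
  using cgenideal_minimal cgenideal_self by blast

lemma (in cring) regular_elem_cgenideal_cong:
  assumes "x \<in> carrier R" "y \<in> carrier R" "PIdl x = PIdl y" "regular_elem R x"
  shows "regular_elem R y"
  unfolding regular_elem_def
proof (intro conjI ballI impI)
  fix z assume z: "z \<in> carrier R" "y \<otimes> z = \<zero>"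
  obtain a where a: "a \<in> carrier R" "x = a \<otimes> y"
    using cgenideal_self[OF assms(1)] assms(3) by (auto simp: cgenideal_def)
  then have "x \<otimes> z = \<zero>" using z assms(2) by (simp add: m_assoc)
  then show "z = \<zero>" using assms(4) z(1) by (simp add: regular_elem_def)
qed (rule assms(2))

lemma (in cring) strong_divisor_cgenideal_cong:
  assumes "x \<in> carrier R" "y \<in> carrier R" "PIdl x = PIdl y" "strong_divisor R x"
  shows "strong_divisor R y"
  using assms regular_elem_cgenideal_cong[OF assms(1-3)] by (simp add: strong_divisor_def)

lemma (in cring) equiv_elem_cgenideal_cong:
  assumes "x \<in> carrier R" "y \<in> carrier R" "PIdl x = PIdl y"
  shows "equiv_elem R x y"
proof -
  have "x \<in> Q \<longleftrightarrow> y \<in> Q" if "Q \<in> Spec R" for Q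
  proof -
    have "ideal Q R" using that primeideal.axioms(1) by (auto simp: Spec_def)
    then show ?thesis using cgenideal_subset_iff assms by metis
  qed
  then show ?thesis by (auto simp: equiv_elem_def D_elem_def D_set_def)
qed

lemma genideal_image_cgenideal:
  assumes "cring R" "cring C" "h \<in> ring_hom R C" "a \<in> carrier R"
  shows "Idl\<^bsub>C\<^esub> (h ` (PIdl\<^bsub>R\<^esub> a)) = PIdl\<^bsub>C\<^esub> (h a)"
proof -
  interpret R: cring R by fact
  interpret C: cring C by fact
  have ha: "h a \<in> carrier C" using ring_hom_closed[OF assms(3,4)] .
  have img: "h ` (PIdl\<^bsub>R\<^esub> a) \<subseteq> PIdl\<^bsub>C\<^esub> (h a)"
  proof
    fix b assume "b \<in> h ` (PIdl\<^bsub>R\<^esub> a)"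
    then obtain r where r: "r \<in> carrier R" "b = h (r \<otimes>\<^bsub>R\<^esub> a)" unfolding cgenideal_def by blast
    then have "b = h r \<otimes>\<^bsub>C\<^esub> h a" using ring_hom_mult[OF assms(3) r(1) assms(4)] by simp
    then show "b \<in> PIdl\<^bsub>C\<^esub> (h a)" using ring_hom_closed[OF assms(3) r(1)] unfolding cgenideal_def by blast
  qed
  have sub: "h ` (PIdl\<^bsub>R\<^esub> a) \<subseteq> carrier C"
    using img ideal.Icarr[OF C.cgenideal_ideal[OF ha]] by blast
  show ?thesis
  proof
    show "Idl\<^bsub>C\<^esub> (h ` (PIdl\<^bsub>R\<^esub> a)) \<subseteq> PIdl\<^bsub>C\<^esub> (h a)"
      by (rule C.genideal_minimal[OF C.cgenideal_ideal[OF ha] img])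
    have "h a \<in> h ` (PIdl\<^bsub>R\<^esub> a)" using R.cgenideal_self[OF assms(4)] by (rule imageI)
    then have "h a \<in> Idl\<^bsub>C\<^esub> (h ` (PIdl\<^bsub>R\<^esub> a))" using C.genideal_self[OF sub] by blast
    then show "PIdl\<^bsub>C\<^esub> (h a) \<subseteq> Idl\<^bsub>C\<^esub> (h ` (PIdl\<^bsub>R\<^esub> a))"
      by (rule C.cgenideal_minimal[OF C.genideal_ideal[OF sub]])
  qed
qed

lemma (in cring) regular_elem_mult_eq_self:
  assumes "regular_elem R x" "s \<in> carrier R" "s \<otimes> x = x"
  shows "s = \<one>"
proof -
  have x: "x \<in> carrier R" using assms(1) by (simp add: regular_elem_def)
  have "x \<otimes> (\<one> \<ominus> s) = x \<ominus> s \<otimes> x" using x assms(2) by algebra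
  also have "\<dots> = \<zero>" using assms(3) x by simp
  finally have "\<one> \<ominus> s = \<zero>" using assms(1,2) by (simp add: regular_elem_def)
  moreover have "s = \<one> \<ominus> (\<one> \<ominus> s)" using assms(2) by algebra
  ultimately show ?thesis by simp
qed

section \<open>Rings of fractions\<close>

definition loc_ext :: "('a, 'm) ring_scheme \<Rightarrow> 'a set \<Rightarrow> 'a set \<Rightarrow> ('a \<times> 'a) set set" where
  "loc_ext B S I = {loc_frac B S a s | a s. a \<in> I \<and> s \<in> S}"

locale ring_of_fractions = cring B for B (structure) +
  fixes S
  assumes S_sub: "S \<subseteq> carrier B"
    and one_S: "\<one> \<in> S"
    and mult_S: "\<lbrakk>s \<in> S; t \<in> S\<rbrakk> \<Longrightarrow> s \<otimes> t \<in> S"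
begin

abbreviation "L \<equiv> localization B S"
abbreviation "fr \<equiv> loc_frac B S"

lemma S_carrier: "s \<in> S \<Longrightarrow> s \<in> carrier B" using S_sub by auto

lemma loc_rel_iff: "((a, s), (b, t)) \<in> loc_rel B S \<longleftrightarrow>
   a \<in> carrier B \<and> s \<in> S \<and> b \<in> carrier B \<and> t \<in> S \<and> (\<exists>u \<in> S. u \<otimes> ((a \<otimes> t) \<ominus> (b \<otimes> s)) = \<zero>)"
  unfolding loc_rel_def by auto

lemma equiv_loc_rel: "equiv (carrier B \<times> S) (loc_rel B S)"
proof (rule equivI)
  show "loc_rel B S \<subseteq> (carrier B \<times> S) \<times> (carrier B \<times> S)" unfolding loc_rel_def by auto
  show "refl_on (carrier B \<times> S) (loc_rel B S)"
  proof (rule refl_onI)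
    fix x assume "x \<in> carrier B \<times> S"
    then obtain a s where x: "x = (a, s)" "a \<in> carrier B" "s \<in> S" by auto
    have "\<one> \<otimes> ((a \<otimes> s) \<ominus> (a \<otimes> s)) = \<zero>" using x S_carrier by algebra
    then show "(x, x) \<in> loc_rel B S" using x one_S by (auto simp: loc_rel_iff)
  qed
  show "sym (loc_rel B S)"
  proof (rule symI)
    fix x y assume "(x, y) \<in> loc_rel B S"
    then obtain a s b t u where xy: "x = (a, s)" "y = (b, t)" "a \<in> carrier B" "s \<in> S" "b \<in> carrier B" "t \<in> S"
      "u \<in> S" "u \<otimes> ((a \<otimes> t) \<ominus> (b \<otimes> s)) = \<zero>"
      by (cases x, cases y) (auto simp: loc_rel_iff)
    have "u \<otimes> ((b \<otimes> s) \<ominus> (a \<otimes> t)) = \<ominus> (u \<otimes> ((a \<otimes> t) \<ominus> (b \<otimes> s)))"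
      using xy(3,5) S_carrier[OF xy(4)] S_carrier[OF xy(6)] S_carrier[OF xy(7)] by algebra
    also have "\<dots> = \<zero>" using xy(8) by simp
    finally have "u \<otimes> ((b \<otimes> s) \<ominus> (a \<otimes> t)) = \<zero>" .
    then show "(y, x) \<in> loc_rel B S" using xy by (auto simp: loc_rel_iff)
  qed
  show "trans (loc_rel B S)"
  proof (rule transI)
    fix x y z assume "(x, y) \<in> loc_rel B S" "(y, z) \<in> loc_rel B S"
    then obtain a s b t c w u v where xy: "x = (a, s)" "y = (b, t)" "z = (c, w)" "a \<in> carrier B" "s \<in> S" "b \<in> carrier B" "t \<in> S"
      "c \<in> carrier B" "w \<in> S"
      "u \<in> S" "u \<otimes> ((a \<otimes> t) \<ominus> (b \<otimes> s)) = \<zero>" "v \<in> S" "v \<otimes> ((b \<otimes> w) \<ominus> (c \<otimes> t)) = \<zero>"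
      by (cases x, cases y, cases z) (auto simp: loc_rel_iff)
    have c: "a \<in> carrier B" "b \<in> carrier B" "c \<in> carrier B" "s \<in> carrier B" "t \<in> carrier B" "w \<in> carrier B"
      "u \<in> carrier B" "v \<in> carrier B" using xy S_carrier by auto
    have "(u \<otimes> v \<otimes> t) \<otimes> ((a \<otimes> w) \<ominus> (c \<otimes> s)) =
       (v \<otimes> w) \<otimes> (u \<otimes> ((a \<otimes> t) \<ominus> (b \<otimes> s))) \<oplus> (u \<otimes> s) \<otimes> (v \<otimes> ((b \<otimes> w) \<ominus> (c \<otimes> t)))"
      using c by algebra
    also have "\<dots> = \<zero>" using xy c by simp
    finally have "(u \<otimes> v \<otimes> t) \<otimes> ((a \<otimes> w) \<ominus> (c \<otimes> s)) = \<zero>" .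
    moreover have "u \<otimes> v \<otimes> t \<in> S" using xy mult_S by auto
    ultimately show "(x, z) \<in> loc_rel B S" using xy by (auto simp: loc_rel_iff)
  qed
qed

lemma frac_eq_iff: "\<lbrakk>a \<in> carrier B; s \<in> S; b \<in> carrier B; t \<in> S\<rbrakk> \<Longrightarrow>
  fr a s = fr b t \<longleftrightarrow> (\<exists>u \<in> S. u \<otimes> ((a \<otimes> t) \<ominus> (b \<otimes> s)) = \<zero>)"
  unfolding loc_frac_def
  by (subst eq_equiv_class_iff[OF equiv_loc_rel]) (auto simp: loc_rel_iff)

lemma frac_cross_eqI: "\<lbrakk>a \<in> carrier B; s \<in> S; b \<in> carrier B; t \<in> S; a \<otimes> t = b \<otimes> s\<rbrakk> \<Longrightarrow> fr a s = fr b t"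
  by (subst frac_eq_iff) (auto intro!: bexI[of _ \<one>] simp: one_S S_carrier)

lemma frac_mem_iff: "(b, t) \<in> fr a s \<longleftrightarrow> ((a, s), (b, t)) \<in> loc_rel B S"
  unfolding loc_frac_def by auto

lemma frac_self: "\<lbrakk>a \<in> carrier B; s \<in> S\<rbrakk> \<Longrightarrow> (a, s) \<in> fr a s"
  unfolding loc_frac_def by (rule equiv_class_self[OF equiv_loc_rel]) auto

lemma frac_eqI: "\<lbrakk>u \<otimes> ((a \<otimes> t) \<ominus> (b \<otimes> s)) = \<zero>; u \<in> S; a \<in> carrier B; s \<in> S; b \<in> carrier B; t \<in> S\<rbrakk> \<Longrightarrow> fr a s = fr b t"
  by (subst frac_eq_iff) auto

lemma carrier_localization: "carrier L = {fr a s | a s. a \<in> carrier B \<and> s \<in> S}"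
  unfolding localization_def by simp

lemma carrier_localizationE: "x \<in> carrier L \<Longrightarrow> (\<And>a s. \<lbrakk>x = fr a s; a \<in> carrier B; s \<in> S\<rbrakk> \<Longrightarrow> P) \<Longrightarrow> P"
  unfolding carrier_localization by auto

lemma frac_closed: "\<lbrakk>a \<in> carrier B; s \<in> S\<rbrakk> \<Longrightarrow> fr a s \<in> carrier L"
  unfolding carrier_localization by auto

lemma mult_frac_wd: "\<lbrakk>(a', s') \<in> fr a s; (b', t') \<in> fr b t\<rbrakk> \<Longrightarrow> fr (a' \<otimes> b') (s' \<otimes> t') = fr (a \<otimes> b) (s \<otimes> t)"
proof -
  assume "(a', s') \<in> fr a s" "(b', t') \<in> fr b t"
  then obtain u v where uv: "a \<in> carrier B" "s \<in> S" "a' \<in> carrier B" "s' \<in> S" "u \<in> S"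
    "u \<otimes> ((a \<otimes> s') \<ominus> (a' \<otimes> s)) = \<zero>"
    "b \<in> carrier B" "t \<in> S" "b' \<in> carrier B" "t' \<in> S" "v \<in> S"
    "v \<otimes> ((b \<otimes> t') \<ominus> (b' \<otimes> t)) = \<zero>"
    by (auto simp: frac_mem_iff loc_rel_iff)
  have c: "s \<in> carrier B" "s' \<in> carrier B" "t \<in> carrier B" "t' \<in> carrier B" "u \<in> carrier B" "v \<in> carrier B"
    using uv S_carrier by auto
  have "(u \<otimes> v) \<otimes> ((a' \<otimes> b') \<otimes> (s \<otimes> t) \<ominus> (a \<otimes> b) \<otimes> (s' \<otimes> t')) =
     \<ominus> ((v \<otimes> b' \<otimes> t) \<otimes> (u \<otimes> ((a \<otimes> s') \<ominus> (a' \<otimes> s))) \<oplus> (u \<otimes> a \<otimes> s') \<otimes> (v \<otimes> ((b \<otimes> t') \<ominus> (b' \<otimes> t))))"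
    using c uv(1,3,7,9) by algebra
  also have "\<dots> = \<zero>" using uv c by (simp only: uv(6) uv(12)) simp
  finally show ?thesis by (rule frac_eqI) (use uv c mult_S in auto)
qed

lemma add_frac_wd: "\<lbrakk>(a', s') \<in> fr a s; (b', t') \<in> fr b t\<rbrakk> \<Longrightarrow>
   fr ((a' \<otimes> t') \<oplus> (b' \<otimes> s')) (s' \<otimes> t') = fr ((a \<otimes> t) \<oplus> (b \<otimes> s)) (s \<otimes> t)"
proof -
  assume "(a', s') \<in> fr a s" "(b', t') \<in> fr b t"
  then obtain u v where uv: "a \<in> carrier B" "s \<in> S" "a' \<in> carrier B" "s' \<in> S" "u \<in> S"
    "u \<otimes> ((a \<otimes> s') \<ominus> (a' \<otimes> s)) = \<zero>"
    "b \<in> carrier B" "t \<in> S" "b' \<in> carrier B" "t' \<in> S" "v \<in> S"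
    "v \<otimes> ((b \<otimes> t') \<ominus> (b' \<otimes> t)) = \<zero>"
    by (auto simp: frac_mem_iff loc_rel_iff)
  have c: "s \<in> carrier B" "s' \<in> carrier B" "t \<in> carrier B" "t' \<in> carrier B" "u \<in> carrier B" "v \<in> carrier B"
    using uv S_carrier by auto
  have "(u \<otimes> v) \<otimes> (((a' \<otimes> t') \<oplus> (b' \<otimes> s')) \<otimes> (s \<otimes> t) \<ominus> ((a \<otimes> t) \<oplus> (b \<otimes> s)) \<otimes> (s' \<otimes> t')) =
     \<ominus> ((v \<otimes> t \<otimes> t') \<otimes> (u \<otimes> ((a \<otimes> s') \<ominus> (a' \<otimes> s))) \<oplus> (u \<otimes> s \<otimes> s') \<otimes> (v \<otimes> ((b \<otimes> t') \<ominus> (b' \<otimes> t))))"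
    using c uv(1,3,7,9) by algebra
  also have "\<dots> = \<zero>" using uv c by (simp only: uv(6) uv(12)) simp
  finally show ?thesis by (rule frac_eqI) (use uv c mult_S in auto)
qed

lemma mult_frac:
  assumes h: "a \<in> carrier B" "s \<in> S" "b \<in> carrier B" "t \<in> S"
  shows "fr a s \<otimes>\<^bsub>L\<^esub> fr b t = fr (a \<otimes> b) (s \<otimes> t)"
proof -
  have "fr a s \<otimes>\<^bsub>L\<^esub> fr b t = \<Union>{fr (a' \<otimes> b') (s' \<otimes> t') | a' s' b' t'. (a', s') \<in> fr a s \<and> (b', t') \<in> fr b t}"
    unfolding localization_def loc_mult_def by simp
  also have "\<dots> = \<Union>{fr (a \<otimes> b) (s \<otimes> t)}"
    using mult_frac_wd frac_self[OF h(1,2)] frac_self[OF h(3,4)] by (intro arg_cong[where f = Union]) blast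
  finally show ?thesis by simp
qed

lemma add_frac:
  assumes h: "a \<in> carrier B" "s \<in> S" "b \<in> carrier B" "t \<in> S"
  shows "fr a s \<oplus>\<^bsub>L\<^esub> fr b t = fr ((a \<otimes> t) \<oplus> (b \<otimes> s)) (s \<otimes> t)"
proof -
  have "fr a s \<oplus>\<^bsub>L\<^esub> fr b t = \<Union>{fr ((a' \<otimes> t') \<oplus> (b' \<otimes> s')) (s' \<otimes> t') | a' s' b' t'. (a', s') \<in> fr a s \<and> (b', t') \<in> fr b t}"
    unfolding localization_def loc_add_def by simp
  also have "\<dots> = \<Union>{fr ((a \<otimes> t) \<oplus> (b \<otimes> s)) (s \<otimes> t)}"
    using add_frac_wd frac_self[OF h(1,2)] frac_self[OF h(3,4)] by (intro arg_cong[where f = Union]) blast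
  finally show ?thesis by simp
qed

lemma zero_localization: "\<zero>\<^bsub>L\<^esub> = fr \<zero> \<one>" unfolding localization_def by simp
lemma one_localization: "\<one>\<^bsub>L\<^esub> = fr \<one> \<one>" unfolding localization_def by simp

lemma abelian_group_localization: "abelian_group L"
proof (rule abelian_groupI)
  fix x y assume "x \<in> carrier L" "y \<in> carrier L"
  then show "x \<oplus>\<^bsub>L\<^esub> y \<in> carrier L"
    by (auto elim!: carrier_localizationE simp: add_frac S_carrier mult_S intro!: frac_closed)
next
  show "\<zero>\<^bsub>L\<^esub> \<in> carrier L" by (simp add: zero_localization frac_closed one_S)
next
  fix x y z assume "x \<in> carrier L" "y \<in> carrier L" "z \<in> carrier L"
  then obtain a s b t c w where h: "x = fr a s" "y = fr b t" "z = fr c w" "a \<in> carrier B" "s \<in> S"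
    "b \<in> carrier B" "t \<in> S" "c \<in> carrier B" "w \<in> S" by (metis carrier_localizationE)
  then have cc: "s \<in> carrier B" "t \<in> carrier B" "w \<in> carrier B" using S_carrier by auto
  show "x \<oplus>\<^bsub>L\<^esub> y \<oplus>\<^bsub>L\<^esub> z = x \<oplus>\<^bsub>L\<^esub> (y \<oplus>\<^bsub>L\<^esub> z)"
    using h cc by (simp add: add_frac mult_S) (rule frac_cross_eqI, auto simp: mult_S, algebra)
next
  fix x y assume "x \<in> carrier L" "y \<in> carrier L"
  then obtain a s b t where h: "x = fr a s" "y = fr b t" "a \<in> carrier B" "s \<in> S"
    "b \<in> carrier B" "t \<in> S" by (metis carrier_localizationE)
  then have cc: "s \<in> carrier B" "t \<in> carrier B" using S_carrier by auto
  show "x \<oplus>\<^bsub>L\<^esub> y = y \<oplus>\<^bsub>L\<^esub> x"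
    using h cc by (simp add: add_frac mult_S) (rule frac_cross_eqI, auto simp: mult_S, algebra)
next
  fix x assume "x \<in> carrier L"
  then obtain a s where h: "x = fr a s" "a \<in> carrier B" "s \<in> S" by (metis carrier_localizationE)
  then have cc: "s \<in> carrier B" using S_carrier by auto
  show "\<zero>\<^bsub>L\<^esub> \<oplus>\<^bsub>L\<^esub> x = x"
    using h cc by (simp add: add_frac mult_S zero_localization one_S) 
next
  fix x assume "x \<in> carrier L"
  then obtain a s where h: "x = fr a s" "a \<in> carrier B" "s \<in> S" by (metis carrier_localizationE)
  then have cc: "s \<in> carrier B" using S_carrier by auto
  show "\<exists>y\<in>carrier L. y \<oplus>\<^bsub>L\<^esub> x = \<zero>\<^bsub>L\<^esub>"
  proof (intro bexI)
    show "fr (\<ominus> a) s \<in> carrier L" using h by (simp add: frac_closed)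
    show "fr (\<ominus> a) s \<oplus>\<^bsub>L\<^esub> x = \<zero>\<^bsub>L\<^esub>"
      using h cc by (simp add: add_frac mult_S zero_localization one_S) (rule frac_cross_eqI, auto simp: mult_S one_S, algebra)
  qed
qed

lemma comm_monoid_localization: "comm_monoid L"
proof (rule comm_monoidI)
  fix x y assume "x \<in> carrier L" "y \<in> carrier L"
  then show "x \<otimes>\<^bsub>L\<^esub> y \<in> carrier L"
    by (auto elim!: carrier_localizationE simp: mult_frac S_carrier mult_S intro!: frac_closed)
next
  show "\<one>\<^bsub>L\<^esub> \<in> carrier L" by (simp add: one_localization frac_closed one_S)
next
  fix x y z assume "x \<in> carrier L" "y \<in> carrier L" "z \<in> carrier L"
  then obtain a s b t c w where h: "x = fr a s" "y = fr b t" "z = fr c w" "a \<in> carrier B" "s \<in> S"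
    "b \<in> carrier B" "t \<in> S" "c \<in> carrier B" "w \<in> S" by (metis carrier_localizationE)
  then have cc: "s \<in> carrier B" "t \<in> carrier B" "w \<in> carrier B" using S_carrier by auto
  show "x \<otimes>\<^bsub>L\<^esub> y \<otimes>\<^bsub>L\<^esub> z = x \<otimes>\<^bsub>L\<^esub> (y \<otimes>\<^bsub>L\<^esub> z)"
    using h cc by (simp add: mult_frac mult_S m_assoc)
next
  fix x assume "x \<in> carrier L"
  then obtain a s where h: "x = fr a s" "a \<in> carrier B" "s \<in> S" by (metis carrier_localizationE)
  then have cc: "s \<in> carrier B" using S_carrier by auto
  show "\<one>\<^bsub>L\<^esub> \<otimes>\<^bsub>L\<^esub> x = x"
    using h cc by (simp add: mult_frac one_localization one_S)
next
  fix x y assume "x \<in> carrier L" "y \<in> carrier L"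
  then obtain a s b t where h: "x = fr a s" "y = fr b t" "a \<in> carrier B" "s \<in> S"
    "b \<in> carrier B" "t \<in> S" by (metis carrier_localizationE)
  then have cc: "s \<in> carrier B" "t \<in> carrier B" using S_carrier by auto
  show "x \<otimes>\<^bsub>L\<^esub> y = y \<otimes>\<^bsub>L\<^esub> x"
    using h cc by (simp add: mult_frac m_comm)
qed

lemma cring_localization: "cring L"
proof (rule cringI[OF abelian_group_localization comm_monoid_localization])
  fix x y z assume "x \<in> carrier L" "y \<in> carrier L" "z \<in> carrier L"
  then obtain a s b t c w where h: "x = fr a s" "y = fr b t" "z = fr c w" "a \<in> carrier B" "s \<in> S"
    "b \<in> carrier B" "t \<in> S" "c \<in> carrier B" "w \<in> S" by (metis carrier_localizationE)
  then have cc: "s \<in> carrier B" "t \<in> carrier B" "w \<in> carrier B" using S_carrier by auto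
  show "(x \<oplus>\<^bsub>L\<^esub> y) \<otimes>\<^bsub>L\<^esub> z = x \<otimes>\<^bsub>L\<^esub> z \<oplus>\<^bsub>L\<^esub> y \<otimes>\<^bsub>L\<^esub> z"
    using h cc by (simp add: add_frac mult_frac mult_S) (rule frac_cross_eqI, auto simp: mult_S, algebra)
qed

lemma loc_map_frac: "loc_map B S a = fr a \<one>" unfolding loc_map_def by simp

lemma loc_map_ring_hom: "loc_map B S \<in> ring_hom B L"
proof (rule ring_hom_memI)
  fix x assume "x \<in> carrier B" then show "loc_map B S x \<in> carrier L" by (simp add: loc_map_frac frac_closed one_S)
next
  fix x y assume "x \<in> carrier B" "y \<in> carrier B"
  then show "loc_map B S (x \<otimes> y) = loc_map B S x \<otimes>\<^bsub>L\<^esub> loc_map B S y"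
    by (simp add: loc_map_frac mult_frac one_S)
next
  fix x y assume "x \<in> carrier B" "y \<in> carrier B"
  then show "loc_map B S (x \<oplus> y) = loc_map B S x \<oplus>\<^bsub>L\<^esub> loc_map B S y"
    by (simp add: loc_map_frac add_frac one_S)
next
  show "loc_map B S \<one> = \<one>\<^bsub>L\<^esub>" by (simp add: loc_map_frac one_localization)
qed

lemma frac_mult_inverse:
  assumes h: "a \<in> S" "s \<in> S"
  shows "fr a s \<otimes>\<^bsub>L\<^esub> fr s a = \<one>\<^bsub>L\<^esub>"
proof -
  have "fr a s \<otimes>\<^bsub>L\<^esub> fr s a = fr (a \<otimes> s) (s \<otimes> a)" using h S_carrier by (simp add: mult_frac)
  also have "\<dots> = fr \<one> \<one>" by (rule frac_cross_eqI) (use h S_carrier mult_S one_S m_comm in auto)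
  finally show ?thesis by (simp add: one_localization)
qed

lemma frac_Units:
  assumes h: "a \<in> S" "s \<in> S"
  shows "fr a s \<in> Units L"
proof -
  have "fr a s \<otimes>\<^bsub>L\<^esub> fr s a = \<one>\<^bsub>L\<^esub>" "fr s a \<otimes>\<^bsub>L\<^esub> fr a s = \<one>\<^bsub>L\<^esub>"
    using h frac_mult_inverse by auto
  then show ?thesis unfolding Units_def using h S_carrier frac_closed by auto
qed

lemma ideal_loc_ext: assumes "ideal I B" shows "ideal (loc_ext B S I) L"
proof -
  interpret L: cring L by (rule cring_localization)
  have IB: "\<And>a. a \<in> I \<Longrightarrow> a \<in> carrier B" using ideal.Icarr[OF assms] by auto
  show ?thesis
  proof (rule L.cring_idealI)
    show "loc_ext B S I \<subseteq> carrier L" unfolding loc_ext_def using IB frac_closed by auto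
    have "\<zero> \<in> I" by (rule additive_subgroup.zero_closed[OF ideal.axioms(1)[OF assms]])
    then show "\<zero>\<^bsub>L\<^esub> \<in> loc_ext B S I" unfolding zero_localization loc_ext_def using one_S by auto
  next
    fix x y assume "x \<in> loc_ext B S I" "y \<in> loc_ext B S I"
    then obtain a s b t where h: "x = fr a s" "y = fr b t" "a \<in> I" "s \<in> S" "b \<in> I" "t \<in> S"
      unfolding loc_ext_def by auto
    have "a \<otimes> t \<in> I" "b \<otimes> s \<in> I" using h S_carrier ideal.I_r_closed[OF assms] by auto
    then have "a \<otimes> t \<oplus> b \<otimes> s \<in> I" by (rule additive_subgroup.a_closed[OF ideal.axioms(1)[OF assms]])
    moreover have "x \<oplus>\<^bsub>L\<^esub> y = fr (a \<otimes> t \<oplus> b \<otimes> s) (s \<otimes> t)" using h IB by (simp add: add_frac)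
    ultimately show "x \<oplus>\<^bsub>L\<^esub> y \<in> loc_ext B S I" unfolding loc_ext_def using h mult_S by blast
  next
    fix x y assume "x \<in> loc_ext B S I" "y \<in> carrier L"
    then obtain a s b t where h: "x = fr a s" "y = fr b t" "a \<in> I" "s \<in> S" "b \<in> carrier B" "t \<in> S"
      unfolding loc_ext_def by (auto elim: carrier_localizationE)
    have "b \<otimes> a \<in> I" using h ideal.I_l_closed[OF assms] by auto
    moreover have "y \<otimes>\<^bsub>L\<^esub> x = fr (b \<otimes> a) (t \<otimes> s)" using h IB by (simp add: mult_frac)
    ultimately show "y \<otimes>\<^bsub>L\<^esub> x \<in> loc_ext B S I" unfolding loc_ext_def using h mult_S by blast
  qed
qed

lemma loc_ext_memD: assumes "ideal I B" "b \<in> carrier B" "t \<in> S" "fr b t \<in> loc_ext B S I"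
  shows "\<exists>u\<in>S. u \<otimes> b \<in> I"
proof -
  obtain a s where h: "fr b t = fr a s" "a \<in> I" "s \<in> S" using assms(4) unfolding loc_ext_def by auto
  have ac: "a \<in> carrier B" using h ideal.Icarr[OF assms(1)] by auto
  obtain w where w: "w \<in> S" "w \<otimes> ((b \<otimes> s) \<ominus> (a \<otimes> t)) = \<zero>" using h(1) frac_eq_iff ac h assms by auto
  have wc: "w \<in> carrier B" "s \<in> carrier B" "t \<in> carrier B" using w h assms S_carrier by auto
  have "(w \<otimes> s) \<otimes> b = w \<otimes> ((b \<otimes> s) \<ominus> (a \<otimes> t)) \<oplus> (w \<otimes> t) \<otimes> a"
    using wc ac assms(2) by algebra
  also have "\<dots> = (w \<otimes> t) \<otimes> a" using w(2) wc ac by simp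
  finally have e: "(w \<otimes> s) \<otimes> b = (w \<otimes> t) \<otimes> a" .
  have "(w \<otimes> t) \<otimes> a \<in> I" by (rule ideal.I_l_closed[OF assms(1) h(2)]) (use wc in simp)
  then have "(w \<otimes> s) \<otimes> b \<in> I" using e by simp
  moreover have "w \<otimes> s \<in> S" using w h mult_S by auto
  ultimately show ?thesis by blast
qed

lemma frac_mem_loc_ext_primeideal_iff:
  assumes "primeideal q B" "q \<inter> S = {}" "b \<in> carrier B" "t \<in> S"
  shows "fr b t \<in> loc_ext B S q \<longleftrightarrow> b \<in> q"
proof
  assume "fr b t \<in> loc_ext B S q"
  then obtain u where u: "u \<in> S" "u \<otimes> b \<in> q"
    using loc_ext_memD[OF primeideal.axioms(1)[OF assms(1)]] assms(3,4) by blast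
  then have "u \<in> q \<or> b \<in> q" using primeideal.I_prime[OF assms(1)] S_carrier assms(3) by auto
  then show "b \<in> q" using u assms(2) by auto
qed (use assms(4) in \<open>auto simp: loc_ext_def\<close>)

lemma loc_ext_contraction:
  assumes "primeideal q B" "q \<inter> S = {}"
  shows "{b \<in> carrier B. loc_map B S b \<in> loc_ext B S q} = q"
  using frac_mem_loc_ext_primeideal_iff[OF assms] one_S ideal.Icarr[OF primeideal.axioms(1)[OF assms(1)]]
  by (auto simp: loc_map_frac)

lemma primeideal_loc_ext:
  assumes "primeideal q B" "q \<inter> S = {}"
  shows "primeideal (loc_ext B S q) L"
proof (rule primeidealI)
  note mem_iff = frac_mem_loc_ext_primeideal_iff[OF assms]
  show "ideal (loc_ext B S q) L" by (rule ideal_loc_ext[OF primeideal.axioms(1)[OF assms(1)]])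
  show "cring L" by (rule cring_localization)
  have "\<one> \<notin> q"
    using primeideal.I_notcarr[OF assms(1)] ideal.one_imp_carrier[OF primeideal.axioms(1)[OF assms(1)]]
    by metis
  then have "\<one>\<^bsub>L\<^esub> \<notin> loc_ext B S q" using mem_iff one_S by (simp add: one_localization)
  moreover have "\<one>\<^bsub>L\<^esub> \<in> carrier L" by (simp add: one_localization frac_closed one_S)
  ultimately show "carrier L \<noteq> loc_ext B S q" by blast
  fix x y assume xy: "x \<in> carrier L" "y \<in> carrier L" "x \<otimes>\<^bsub>L\<^esub> y \<in> loc_ext B S q"
  then obtain a s b t where h: "x = fr a s" "y = fr b t" "a \<in> carrier B" "s \<in> S" "b \<in> carrier B" "t \<in> S"
    by (auto elim!: carrier_localizationE)
  then have "a \<otimes> b \<in> q" using xy mem_iff mult_S by (auto simp: mult_frac)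
  then have "a \<in> q \<or> b \<in> q" using primeideal.I_prime[OF assms(1)] h by auto
  then show "x \<in> loc_ext B S q \<or> y \<in> loc_ext B S q" using mem_iff h by auto
qed

lemma ring_hom_ring_loc_map: "ring_hom_ring B L (loc_map B S)"
  by (rule ring_hom_ringI2[OF ring_axioms cring.axioms(1)[OF cring_localization] loc_map_ring_hom])

lemma primeideal_contraction:
  assumes "primeideal Q L"
  shows "primeideal {b \<in> carrier B. loc_map B S b \<in> Q} B"
    and "{b \<in> carrier B. loc_map B S b \<in> Q} \<inter> S = {}"
proof -
  show "primeideal {b \<in> carrier B. loc_map B S b \<in> Q} B"
    by (rule ring_hom_ring.primeideal_vimage[OF ring_hom_ring_loc_map is_cring assms])
  interpret Q: primeideal Q L by fact
  have "loc_map B S s \<notin> Q" if "s \<in> S" for s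
    using Q.Units_imp_carrier Q.I_notcarr frac_Units[OF that one_S] by (auto simp: loc_map_frac)
  then show "{b \<in> carrier B. loc_map B S b \<in> Q} \<inter> S = {}" by blast
qed

end

lemma (in cring) mem_powers_self: "x \<in> carrier R \<Longrightarrow> x \<in> {x [^] (n::nat) | n. True}"
  by (auto intro!: exI[of _ "1::nat"])

lemma (in cring) ring_of_fractions_powers:
  assumes "x \<in> carrier R"
  shows "ring_of_fractions R {x [^] (n::nat) | n. True}"
proof unfold_locales
  show "{x [^] (n::nat) | n. True} \<subseteq> carrier R" using assms by auto
  show "\<one> \<in> {x [^] (n::nat) | n. True}" by (auto intro: exI[of _ "0::nat"])
  fix s t assume "s \<in> {x [^] (n::nat) | n. True}" "t \<in> {x [^] (n::nat) | n. True}"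
  then show "s \<otimes> t \<in> {x [^] (n::nat) | n. True}" using nat_pow_mult[OF assms] by blast
qed

text \<open>Elements of \<open>UP R\<close> are their coefficient functions: \<open>coeff (UP R) p i = p i\<close>.\<close>

context UP_cring
begin

lemma coeff_eq_apply: "p \<in> carrier P \<Longrightarrow> up_ring.coeff P p = p"
  unfolding P_def UP_def by (simp only: up_ring.simps partial_object.simps) simp

lemma apply_closed: "p \<in> carrier P \<Longrightarrow> p n \<in> carrier R"
  using coeff_closed[of p n] by (simp only: coeff_eq_apply)

lemma mult_apply:
  "\<lbrakk>p \<in> carrier P; q \<in> carrier P\<rbrakk> \<Longrightarrow> (p \<otimes>\<^bsub>P\<^esub> q) n = (\<Oplus>i \<in> {..n}. p i \<otimes> q (n - i))"
  using coeff_mult[of p q n] by (simp add: coeff_eq_apply)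

lemma add_apply: "\<lbrakk>p \<in> carrier P; q \<in> carrier P\<rbrakk> \<Longrightarrow> (p \<oplus>\<^bsub>P\<^esub> q) n = p n \<oplus> q n"
  using coeff_add[of p q n] by (simp add: coeff_eq_apply)

lemma zero_apply: "\<zero>\<^bsub>P\<^esub> n = \<zero>"
  using coeff_zero[of n] by (simp add: coeff_eq_apply)

lemma one_apply: "\<one>\<^bsub>P\<^esub> n = (if n = 0 then \<one> else \<zero>)"
  using coeff_one[of n] by (simp add: coeff_eq_apply)

lemma monom_apply: "a \<in> carrier R \<Longrightarrow> up_ring.monom P a m n = (if m = n then a else \<zero>)"
  using coeff_monom[of a m n] by (simp add: coeff_eq_apply)

lemma const_mult_apply:
  "\<lbrakk>a \<in> carrier R; p \<in> carrier P\<rbrakk> \<Longrightarrow> (p \<otimes>\<^bsub>P\<^esub> up_ring.monom P a 0) n = a \<otimes> p n"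
  using coeff_smult[of a p n] monom_mult_is_smult[of a p] m_comm[of p "up_ring.monom P a 0"]
  by (simp add: coeff_eq_apply)

lemma apply_above_deg: "\<lbrakk>p \<in> carrier P; deg R p < n\<rbrakk> \<Longrightarrow> p n = \<zero>"
  using deg_aboveD[of p n] by (simp only: coeff_eq_apply)

lemma poly_expansion:
  assumes "p \<in> carrier P"
  shows "p = (\<Oplus>\<^bsub>P\<^esub> i \<in> {..deg R p}. up_ring.monom P (p i) 0 \<otimes>\<^bsub>P\<^esub> up_ring.monom P \<one> i)"
proof -
  have "p = (\<Oplus>\<^bsub>P\<^esub> i \<in> {..deg R p}. up_ring.monom P (p i) i)"
    using up_repr[OF assms] by (simp add: coeff_eq_apply[OF assms])
  also have "\<dots> = (\<Oplus>\<^bsub>P\<^esub> i \<in> {..deg R p}. up_ring.monom P (p i) 0 \<otimes>\<^bsub>P\<^esub> up_ring.monom P \<one> i)"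
  proof (rule finsum_cong')
    fix i
    show "up_ring.monom P (p i) i = up_ring.monom P (p i) 0 \<otimes>\<^bsub>P\<^esub> up_ring.monom P \<one> i"
      using monom_mult[OF apply_closed[OF assms, of i] R.one_closed, of 0 i] apply_closed[OF assms] by simp
  qed (use apply_closed[OF assms] in auto)
  finally show ?thesis .
qed

lemma mult_apply_atMost_deg:
  assumes "t \<in> carrier P" "f \<in> carrier P"
  shows "(t \<otimes>\<^bsub>P\<^esub> f) N = (\<Oplus>i \<in> {..deg R f}. (if i \<le> N then t (N - i) else \<zero>) \<otimes> f i)"
proof -
  define g where "g = (\<lambda>i. if i \<le> N then f i \<otimes> t (N - i) else \<zero>)"
  have g: "g \<in> {..N + deg R f} \<rightarrow> carrier R" using assms apply_closed by (auto simp: g_def)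
  have "(t \<otimes>\<^bsub>P\<^esub> f) N = (\<Oplus>i \<in> {..N}. f i \<otimes> t (N - i))"
    using assms by (simp add: mult_apply[symmetric] m_comm)
  also have "\<dots> = (\<Oplus>i \<in> {..N + deg R f}. g i)"
    using g by (intro R.add.finprod_mono_neutral_cong_left) (auto simp: g_def)
  also have "\<dots> = (\<Oplus>i \<in> {..deg R f}. (if i \<le> N then t (N - i) else \<zero>) \<otimes> f i)"
    using g assms apply_closed apply_above_deg[OF assms(2)]
    by (intro R.add.finprod_mono_neutral_cong_left[symmetric]) (auto simp: g_def R.m_comm)
  finally show ?thesis .
qed

end

definition poly_ideal :: "('a, 'm) ring_scheme \<Rightarrow> 'a set \<Rightarrow> (nat \<Rightarrow> 'a) set" where
  "poly_ideal R J = {f \<in> carrier (UP R). \<forall>i. f i \<in> J}"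

context UP_cring
begin

lemma ideal_poly_ideal:
  assumes "ideal J R"
  shows "ideal (poly_ideal R J) P"
proof -
  interpret J: ideal J R by fact
  show ?thesis
  proof (rule cring_idealI)
    show "\<zero>\<^bsub>P\<^esub> \<in> poly_ideal R J" by (simp add: poly_ideal_def P_def[symmetric] zero_apply)
  next
    fix f g assume "f \<in> poly_ideal R J" "g \<in> poly_ideal R J"
    then show "f \<oplus>\<^bsub>P\<^esub> g \<in> poly_ideal R J"
      by (auto simp: poly_ideal_def P_def[symmetric] add_apply J.a_closed)
  next
    fix f g assume f: "f \<in> poly_ideal R J" and g: "g \<in> carrier P"
    have f': "f \<in> carrier P" "\<And>i. f i \<in> J" using f by (auto simp: poly_ideal_def P_def[symmetric])
    have "(g \<otimes>\<^bsub>P\<^esub> f) n \<in> J" for n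
      unfolding mult_apply[OF g f'(1)]
      by (rule J.I_finsum_closed) (simp_all add: J.I_l_closed[OF f'(2) apply_closed[OF g]])
    then show "g \<otimes>\<^bsub>P\<^esub> f \<in> poly_ideal R J"
      using f g by (auto simp: poly_ideal_def P_def[symmetric])
  qed (auto simp: poly_ideal_def P_def[symmetric])
qed

lemma mult_apply_mod_lower_coeffs:
  assumes q: "ideal q R" and fg: "f \<in> carrier P" "g \<in> carrier P"
    and f: "\<And>i. i < i0 \<Longrightarrow> f i \<in> q" and g: "\<And>j. j < j0 \<Longrightarrow> g j \<in> q"
  shows "(f \<otimes>\<^bsub>P\<^esub> g) (i0 + j0) \<ominus> f i0 \<otimes> g j0 \<in> q"
proof -
  interpret q: ideal q R by fact
  define n where "n = i0 + j0"
  define rest where "rest = (\<Oplus>i \<in> {..n} - {i0}. f i \<otimes> g (n - i))"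
  have "rest \<in> q"
    unfolding rest_def
  proof (rule q.I_finsum_closed)
    fix i assume i: "i \<in> {..n} - {i0}"
    show "f i \<otimes> g (n - i) \<in> q"
    proof (cases "i < i0")
      case True
      then show ?thesis using f q.I_r_closed fg apply_closed by simp
    next
      case False
      then have "n - i < j0" using i n_def by auto
      then show ?thesis using g q.I_l_closed fg apply_closed by simp
    qed
  qed simp
  have "(f \<otimes>\<^bsub>P\<^esub> g) n = (\<Oplus>i \<in> insert i0 ({..n} - {i0}). f i \<otimes> g (n - i))"
    using fg n_def by (simp add: mult_apply insert_absorb)
  also have "\<dots> = f i0 \<otimes> g j0 \<oplus> rest"
    unfolding rest_def using fg apply_closed n_def by (subst R.finsum_insert) auto
  finally have "(f \<otimes>\<^bsub>P\<^esub> g) n \<ominus> f i0 \<otimes> g j0 = rest"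
    using fg apply_closed q.Icarr[OF \<open>rest \<in> q\<close>] by simp algebra
  then show ?thesis using \<open>rest \<in> q\<close> n_def by simp
qed

text \<open>Take the first coefficients \<open>f i\<^sub>0, g j\<^sub>0 \<notin> q\<close> and look at the coefficient of \<open>X\<^bsup>i\<^sub>0 + j\<^sub>0\<^esup>\<close>.\<close>
lemma primeideal_poly_ideal:
  assumes "primeideal q R"
  shows "primeideal (poly_ideal R q) P"
proof (rule primeidealI)
  interpret q: primeideal q R by fact
  show "ideal (poly_ideal R q) P" by (rule ideal_poly_ideal[OF q.is_ideal])
  show "cring P" by (rule UP_cring)
  have "\<one> \<notin> q" using q.I_notcarr q.one_imp_carrier by blast
  then have "\<one>\<^bsub>P\<^esub> \<notin> poly_ideal R q" by (auto simp: poly_ideal_def P_def[symmetric] one_apply)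
  then show "carrier P \<noteq> poly_ideal R q" by blast
  fix f g assume fg: "f \<in> carrier P" "g \<in> carrier P" "f \<otimes>\<^bsub>P\<^esub> g \<in> poly_ideal R q"
  show "f \<in> poly_ideal R q \<or> g \<in> poly_ideal R q"
  proof (rule ccontr)
    assume "\<not> (f \<in> poly_ideal R q \<or> g \<in> poly_ideal R q)"
    then have ex: "\<exists>i. f i \<notin> q" "\<exists>j. g j \<notin> q" using fg by (auto simp: poly_ideal_def P_def[symmetric])
    define i0 where "i0 = (LEAST i. f i \<notin> q)"
    define j0 where "j0 = (LEAST j. g j \<notin> q)"
    have i0: "f i0 \<notin> q" "\<And>i. i < i0 \<Longrightarrow> f i \<in> q"
      unfolding i0_def using ex(1) LeastI_ex not_less_Least by (metis, metis)
    have j0: "g j0 \<notin> q" "\<And>j. j < j0 \<Longrightarrow> g j \<in> q"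
      unfolding j0_def using ex(2) LeastI_ex not_less_Least by (metis, metis)
    have "(f \<otimes>\<^bsub>P\<^esub> g) (i0 + j0) \<in> q" using fg(3) by (simp add: poly_ideal_def P_def[symmetric])
    then have "(f \<otimes>\<^bsub>P\<^esub> g) (i0 + j0) \<ominus> ((f \<otimes>\<^bsub>P\<^esub> g) (i0 + j0) \<ominus> f i0 \<otimes> g j0) \<in> q"
      using mult_apply_mod_lower_coeffs[OF q.is_ideal fg(1,2) i0(2) j0(2)] q.I_minus_closed by blast
    moreover have "(f \<otimes>\<^bsub>P\<^esub> g) (i0 + j0) \<ominus> ((f \<otimes>\<^bsub>P\<^esub> g) (i0 + j0) \<ominus> f i0 \<otimes> g j0) = f i0 \<otimes> g j0"
      using apply_closed[OF m_closed[OF fg(1,2)], of "i0 + j0"] apply_closed[OF fg(1), of i0]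
        apply_closed[OF fg(2), of j0] by algebra
    ultimately show False using q.I_prime i0(1) j0(1) fg apply_closed by auto
  qed
qed

end

locale local_cring = cring R for R (structure) +
  fixes M
  assumes M_maximal: "maximalideal M R"
    and maximalideal_unique: "maximalideal N R \<Longrightarrow> N = M"

sublocale local_cring \<subseteq> M: maximalideal M R by (rule M_maximal)

lemma local_ring_imp_local_cring:
  assumes "local_ring R"
  obtains M where "local_cring R M"
  using assms unfolding local_ring_def local_cring_def local_cring_axioms_def by metis

context local_cring
begin

lemma one_notin_M: "\<one> \<notin> M"
  using M.I_notcarr M.one_imp_carrier by blast

lemma proper_ideal_subset_M: "\<lbrakk>ideal J R; J \<noteq> carrier R\<rbrakk> \<Longrightarrow> J \<subseteq> M"
  using exists_maximalideal_superset maximalideal_unique by metis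

lemma notin_M_imp_Units:
  assumes "x \<in> carrier R" "x \<notin> M"
  shows "x \<in> Units R"
proof (rule ccontr)
  assume "x \<notin> Units R"
  then have "\<one> \<notin> PIdl x" using assms(1) m_comm by (auto simp: cgenideal_def Units_def)
  then have "PIdl x \<subseteq> M"
    using proper_ideal_subset_M[OF cgenideal_ideal[OF assms(1)]] by blast
  then show False using cgenideal_self[OF assms(1)] assms(2) by blast
qed

lemma Units_notin_M: "u \<in> Units R \<Longrightarrow> u \<notin> M"
  using M.Units_imp_carrier M.I_notcarr by blast

lemma Units_minus_M_Units:
  assumes "u \<in> Units R" "m \<in> M"
  shows "u \<ominus> m \<in> Units R"
proof (rule notin_M_imp_Units)
  have c: "u \<in> carrier R" "m \<in> carrier R" using assms M.Icarr by auto
  then show "u \<ominus> m \<in> carrier R" by simp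
  show "u \<ominus> m \<notin> M"
  proof
    assume "u \<ominus> m \<in> M"
    then have "(u \<ominus> m) \<oplus> m \<in> M" using assms(2) by (rule M.a_closed)
    moreover have "(u \<ominus> m) \<oplus> m = u" using c by algebra
    ultimately show False using Units_notin_M assms(1) by simp
  qed
qed

lemma eq_mult_M_imp_zero:
  assumes "a \<in> carrier R" "r \<in> M" "a = a \<otimes> r"
  shows "a = \<zero>"
proof -
  have r: "r \<in> carrier R" using assms(2) M.Icarr by blast
  have "(\<one> \<ominus> r) \<otimes> a = a \<ominus> a \<otimes> r" using assms(1) r by algebra
  also have "\<dots> = \<zero>" using assms(1,3) r by (metis r_neg minus_eq)
  finally have "(\<one> \<ominus> r) \<otimes> a \<in> {\<zero>}" by simp
  then show ?thesis
    using ideal.I_Units_cancel[OF zeroideal Units_minus_M_Units[OF Units_one_closed assms(2)] assms(1)]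
    by simp
qed

end

section \<open>Triangular systems over a local ring\<close>

text \<open>Subtracting \<open>k\<close> times row \<open>b\<close> from row \<open>a\<close> clears the last column.\<close>
lemma (in cring) finsum_row_elimination:
  fixes n :: nat
  assumes "k \<in> carrier R" "k \<otimes> b (Suc n) = a (Suc n)"
    and "\<And>i. i \<le> Suc n \<Longrightarrow> a i \<in> carrier R \<and> b i \<in> carrier R \<and> x i \<in> carrier R"
  shows "(\<Oplus>i \<in> {..Suc n}. a i \<otimes> x i) \<ominus> k \<otimes> (\<Oplus>i \<in> {..Suc n}. b i \<otimes> x i)
       = (\<Oplus>i \<in> {..n}. (a i \<ominus> k \<otimes> b i) \<otimes> x i)"
proof -
  define A where "A = (\<Oplus>i \<in> {..n}. a i \<otimes> x i)"
  define B where "B = (\<Oplus>i \<in> {..n}. b i \<otimes> x i)"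
  have c: "a (Suc n) \<in> carrier R" "b (Suc n) \<in> carrier R" "x (Suc n) \<in> carrier R"
    "A \<in> carrier R" "B \<in> carrier R"
    using assms(3) by (auto simp: A_def B_def)
  have "(\<Oplus>i \<in> {..n}. (a i \<ominus> k \<otimes> b i) \<otimes> x i) = (\<Oplus>i \<in> {..n}. a i \<otimes> x i \<oplus> \<ominus> k \<otimes> (b i \<otimes> x i))"
    using assms(1,3) by (intro finsum_cong') (auto simp: minus_eq l_distr m_assoc l_minus)
  also have "\<dots> = A \<ominus> k \<otimes> B"
    using assms(1,3) by (simp add: finsum_addf finsum_rdistr[symmetric] A_def B_def minus_eq l_minus
        Pi_def m_assoc)
  finally have rhs: "(\<Oplus>i \<in> {..n}. (a i \<ominus> k \<otimes> b i) \<otimes> x i) = A \<ominus> k \<otimes> B" .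
  have "(\<Oplus>i \<in> {..Suc n}. a i \<otimes> x i) \<ominus> k \<otimes> (\<Oplus>i \<in> {..Suc n}. b i \<otimes> x i)
      = (k \<otimes> b (Suc n) \<otimes> x (Suc n) \<oplus> A) \<ominus> k \<otimes> (b (Suc n) \<otimes> x (Suc n) \<oplus> B)"
    using assms(2,3) by (simp add: A_def B_def Pi_def)
  also have "\<dots> = A \<ominus> k \<otimes> B" using assms(1) c by algebra
  finally show ?thesis using rhs by simp
qed

context local_cring
begin

text \<open>One step of Gaussian elimination from the bottom row: since the entries above the diagonal
  lie in \<open>M\<close>, the new diagonal entries \<open>c q q \<ominus> m\<close> with \<open>m \<in> M\<close> are still units.\<close>
lemma triangular_system_eliminate_last:
  fixes n :: nat
  assumes J: "ideal J R"
    and c: "\<forall>q\<le>Suc n. \<forall>i\<le>Suc n. c q i \<in> carrier R" and x: "\<forall>i\<le>Suc n. x i \<in> carrier R"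
    and diag: "\<forall>q\<le>Suc n. c q q \<in> Units R" and upper: "\<forall>q i. q < i \<and> i \<le> Suc n \<longrightarrow> c q i \<in> M"
    and rows: "\<forall>q\<le>Suc n. (\<Oplus>i \<in> {..Suc n}. c q i \<otimes> x i) \<in> J"
  defines "c' \<equiv> \<lambda>q i. c q i \<ominus> (c q (Suc n) \<otimes> inv (c (Suc n) (Suc n))) \<otimes> c (Suc n) i"
  shows "\<forall>q\<le>n. \<forall>i\<le>n. c' q i \<in> carrier R" and "\<forall>q\<le>n. c' q q \<in> Units R"
    and "\<forall>q i. q < i \<and> i \<le> n \<longrightarrow> c' q i \<in> M" and "\<forall>q\<le>n. (\<Oplus>i \<in> {..n}. c' q i \<otimes> x i) \<in> J"
proof -
  define d where "d = inv (c (Suc n) (Suc n))"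
  have d: "d \<in> carrier R" "d \<otimes> c (Suc n) (Suc n) = \<one>" using diag by (auto simp: d_def)
  have M_part: "(c q (Suc n) \<otimes> d) \<otimes> c (Suc n) i \<in> M" if "q < Suc n" "i \<le> Suc n" for q i
  proof -
    have "c q (Suc n) \<in> M" using upper that by auto
    then show ?thesis using that c d by (intro M.I_r_closed) auto
  qed
  show "\<forall>q\<le>n. \<forall>i\<le>n. c' q i \<in> carrier R" using c d by (auto simp: c'_def d_def)
  show "\<forall>q\<le>n. c' q q \<in> Units R"
    using diag M_part by (auto simp: c'_def d_def[symmetric] intro: Units_minus_M_Units)
  show "\<forall>q i. q < i \<and> i \<le> n \<longrightarrow> c' q i \<in> M"
    using upper M_part by (auto simp: c'_def d_def[symmetric] intro: M.I_minus_closed)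
  show "\<forall>q\<le>n. (\<Oplus>i \<in> {..n}. c' q i \<otimes> x i) \<in> J"
  proof (intro allI impI)
    fix q assume q: "q \<le> n"
    have k: "c q (Suc n) \<otimes> d \<in> carrier R" "(c q (Suc n) \<otimes> d) \<otimes> c (Suc n) (Suc n) = c q (Suc n)"
      using c d q by (auto simp: m_assoc)
    have "(\<Oplus>i \<in> {..n}. c' q i \<otimes> x i)
        = (\<Oplus>i \<in> {..Suc n}. c q i \<otimes> x i) \<ominus> (c q (Suc n) \<otimes> d) \<otimes> (\<Oplus>i \<in> {..Suc n}. c (Suc n) i \<otimes> x i)"
      unfolding c'_def d_def[symmetric]
      by (rule finsum_row_elimination[symmetric]) (use k c x q in auto)
    also have "\<dots> \<in> J"
      using q rows k(1) by (intro ideal.I_minus_closed[OF J] ideal.I_l_closed[OF J]) auto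
    finally show "(\<Oplus>i \<in> {..n}. c' q i \<otimes> x i) \<in> J" .
  qed
qed

lemma triangular_system_in_ideal:
  fixes n :: nat
  assumes "ideal J R"
  shows "\<lbrakk>\<forall>q\<le>n. \<forall>i\<le>n. c q i \<in> carrier R; \<forall>i\<le>n. x i \<in> carrier R; \<forall>q\<le>n. c q q \<in> Units R;
          \<forall>q i. q < i \<and> i \<le> n \<longrightarrow> c q i \<in> M; \<forall>q\<le>n. (\<Oplus>i \<in> {..n}. c q i \<otimes> x i) \<in> J\<rbrakk>
         \<Longrightarrow> \<forall>i\<le>n. x i \<in> J"
proof (induction n arbitrary: c)
  case 0
  then have "c 0 0 \<otimes> x 0 \<in> J" by simp
  then show ?case using ideal.I_Units_cancel[OF assms] 0(2,3) by auto
next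
  case (Suc n)
  have "\<forall>i\<le>n. x i \<in> J"
    using Suc.IH triangular_system_eliminate_last[OF assms Suc.prems] Suc.prems(2) by auto
  moreover have "x (Suc n) \<in> J"
    using ideal.I_Units_last_summand[OF assms] Suc.prems calculation by blast
  ultimately show ?case using le_Suc_eq by auto
qed

end

section \<open>The multiplicative set \<open>\<Sigma>\<close> of polynomials of unit content\<close>

sublocale local_cring \<subseteq> UP: UP_cring R "UP R" by unfold_locales

context local_cring
begin

lemma Sigma_set_iff: "s \<in> Sigma_set R \<longleftrightarrow> s \<in> carrier (UP R) \<and> s \<notin> poly_ideal R M"
proof (cases "s \<in> carrier (UP R)")
  case True
  define G where "G = {s i | i. i \<le> deg R s}"
  have G: "G \<subseteq> carrier R" using UP.apply_closed[OF True] by (auto simp: G_def)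
  have "Idl G = carrier R \<longleftrightarrow> \<not> G \<subseteq> M"
  proof
    assume "Idl G = carrier R"
    then show "\<not> G \<subseteq> M" using genideal_minimal[OF M.is_ideal] one_notin_M by blast
  next
    assume "\<not> G \<subseteq> M"
    then obtain g where "g \<in> G" "g \<notin> M" by blast
    then have "g \<in> Units R" using G notin_M_imp_Units by blast
    then show "Idl G = carrier R"
      using ideal.Units_imp_carrier[OF genideal_ideal[OF G]] genideal_self[OF G] \<open>g \<in> G\<close> by blast
  qed
  moreover have "G \<subseteq> M \<longleftrightarrow> (\<forall>i. s i \<in> M)"
  proof
    assume GM: "G \<subseteq> M"
    show "\<forall>i. s i \<in> M"
    proof
      fix i
      show "s i \<in> M"
      proof (cases "i \<le> deg R s")
        case True
        then show ?thesis using GM by (auto simp: G_def)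
      next
        case False
        then show ?thesis using UP.apply_above_deg[OF \<open>s \<in> carrier (UP R)\<close>] M.zero_closed by simp
      qed
    qed
  qed (auto simp: G_def)
  ultimately show ?thesis
    using True by (simp add: Sigma_set_def content_ideal_def poly_ideal_def G_def)
qed (simp add: Sigma_set_def)

lemma Sigma_set_carrier: "s \<in> Sigma_set R \<Longrightarrow> s \<in> carrier (UP R)"
  by (simp add: Sigma_set_def)

lemma Sigma_set_UnitsE:
  assumes "s \<in> Sigma_set R"
  obtains j where "s j \<in> Units R"
  using assms notin_M_imp_Units UP.apply_closed by (auto simp: Sigma_set_iff poly_ideal_def)

lemma ring_of_fractions_Sigma_set: "ring_of_fractions (UP R) (Sigma_set R)"
proof unfold_locales
  show "Sigma_set R \<subseteq> carrier (UP R)" using Sigma_set_carrier by blast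
  have "\<one>\<^bsub>UP R\<^esub> 0 \<notin> M" using one_notin_M by (simp add: UP.one_apply)
  then show "\<one>\<^bsub>UP R\<^esub> \<in> Sigma_set R" by (auto simp: Sigma_set_iff poly_ideal_def)
  fix s t assume "s \<in> Sigma_set R" "t \<in> Sigma_set R"
  then show "s \<otimes>\<^bsub>UP R\<^esub> t \<in> Sigma_set R"
    using primeideal.I_prime[OF UP.primeideal_poly_ideal[OF maximalideal_prime[OF M_maximal]]]
    by (auto simp: Sigma_set_iff)
qed

text \<open>If \<open>t \<in> \<Sigma>\<close> and \<open>j\<^sub>0\<close> is the first index with \<open>t j\<^sub>0\<close> a unit, the coefficients of \<open>t f\<close>
  at \<open>j\<^sub>0, \<dots>, j\<^sub>0 + deg f\<close> form a triangular system in the coefficients of \<open>f\<close>.\<close>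
lemma Sigma_mult_coeffs_in_ideal:
  assumes J: "ideal J R" and t: "t \<in> Sigma_set R" and f: "f \<in> carrier (UP R)"
    and tf: "\<And>N. (t \<otimes>\<^bsub>UP R\<^esub> f) N \<in> J"
  shows "f i \<in> J"
proof -
  have tc: "t \<in> carrier (UP R)" and "\<exists>j. t j \<notin> M"
    using t by (auto simp: Sigma_set_iff poly_ideal_def)
  define j0 where "j0 = (LEAST j. t j \<notin> M)"
  have j0: "t j0 \<notin> M" "\<And>j. j < j0 \<Longrightarrow> t j \<in> M"
    unfolding j0_def using \<open>\<exists>j. t j \<notin> M\<close> LeastI_ex not_less_Least by (metis, metis)
  define n where "n = deg R f"
  define c where "c = (\<lambda>q i. if i \<le> j0 + q then t (j0 + q - i) else \<zero>)"
  have fc: "\<And>i. f i \<in> carrier R" and tcc: "\<And>i. t i \<in> carrier R"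
    using f tc UP.apply_closed by auto
  have f0: "\<And>i. n < i \<Longrightarrow> f i = \<zero>" using UP.apply_above_deg f n_def by auto
  have rows: "\<forall>q\<le>n. (\<Oplus>i \<in> {..n}. c q i \<otimes> f i) \<in> J"
    using tf UP.mult_apply_atMost_deg[OF tc f] by (simp add: c_def n_def)
  have "\<forall>i\<le>n. f i \<in> J"
  proof (rule triangular_system_in_ideal[OF J, where c = c and x = f])
    show "\<forall>q\<le>n. c q q \<in> Units R" unfolding c_def using j0 notin_M_imp_Units tcc by simp
    show "\<forall>q i. q < i \<and> i \<le> n \<longrightarrow> c q i \<in> M" unfolding c_def using j0(2) M.zero_closed by auto
  qed (use rows fc tcc in \<open>auto simp: c_def\<close>)
  then show ?thesis using f0 additive_subgroup.zero_closed[OF ideal.axioms(1)[OF J]] by (cases "i \<le> n") auto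
qed

end

section \<open>The Nagata ring \<open>R(X)\<close>\<close>

sublocale local_cring \<subseteq> Frac: ring_of_fractions "UP R" "Sigma_set R"
  by (rule ring_of_fractions_Sigma_set)

sublocale local_cring \<subseteq> RX: cring "localization (UP R) (Sigma_set R)"
  by (rule Frac.cring_localization)

context local_cring
begin

abbreviation "RX \<equiv> localization (UP R) (Sigma_set R)"

text \<open>The ideal \<open>J(X) = J R(X)\<close>, realised as \<open>J[X]\<^sub>\<Sigma>\<close>.\<close>
abbreviation "nagata_ext J \<equiv> loc_ext (UP R) (Sigma_set R) (poly_ideal R J)"

lemma ideal_nagata_ext: "ideal J R \<Longrightarrow> ideal (nagata_ext J) RX"
  by (rule Frac.ideal_loc_ext[OF UP.ideal_poly_ideal])

lemma nagata_map_eq: "nagata_map R q = Frac.fr q \<one>\<^bsub>UP R\<^esub>"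
  by (simp add: nagata_map_def loc_map_def)

lemma nagata_const_eq: "nagata_const R a = Frac.fr (up_ring.monom (UP R) a 0) \<one>\<^bsub>UP R\<^esub>"
  by (simp add: nagata_const_def nagata_map_eq)

lemma nagata_const_ring_hom: "nagata_const R \<in> ring_hom R RX"
proof -
  have "(\<lambda>a. up_ring.monom (UP R) a 0) \<in> ring_hom R (UP R)"
    by (rule ring_hom_memI) (simp_all add: UP.monom_mult[of _ _ 0 0, simplified] UP.monom_add)
  then have "loc_map (UP R) (Sigma_set R) \<circ> (\<lambda>a. up_ring.monom (UP R) a 0) \<in> ring_hom R RX"
    by (rule ring_hom_trans[OF _ Frac.loc_map_ring_hom])
  moreover have "nagata_const R = loc_map (UP R) (Sigma_set R) \<circ> (\<lambda>a. up_ring.monom (UP R) a 0)"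
    by (simp add: fun_eq_iff nagata_const_def nagata_map_def)
  ultimately show ?thesis by simp
qed

lemma nagata_const_closed: "a \<in> carrier R \<Longrightarrow> nagata_const R a \<in> carrier RX"
  using ring_hom_closed[OF nagata_const_ring_hom] .

lemma nagata_const_mult:
  "\<lbrakk>a \<in> carrier R; b \<in> carrier R\<rbrakk> \<Longrightarrow> nagata_const R (a \<otimes> b) = nagata_const R a \<otimes>\<^bsub>RX\<^esub> nagata_const R b"
  using ring_hom_mult[OF nagata_const_ring_hom] .

text \<open>A unit coefficient of the denominator isolates the constant.\<close>
lemma nagata_const_mem_nagata_ext_iff:
  assumes J: "ideal J R" and a: "a \<in> carrier R"
  shows "nagata_const R a \<in> nagata_ext J \<longleftrightarrow> a \<in> J"
proof
  let ?A = "up_ring.monom (UP R) a 0"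
  assume "nagata_const R a \<in> nagata_ext J"
  then have "\<exists>u\<in>Sigma_set R. u \<otimes>\<^bsub>UP R\<^esub> ?A \<in> poly_ideal R J"
    by (intro Frac.loc_ext_memD[OF UP.ideal_poly_ideal[OF J] UP.monom_closed[OF a] Frac.one_S])
      (simp add: nagata_const_eq)
  then obtain u where u: "u \<in> Sigma_set R" "u \<otimes>\<^bsub>UP R\<^esub> ?A \<in> poly_ideal R J" by blast
  obtain j where j: "u j \<in> Units R" using Sigma_set_UnitsE[OF u(1)] .
  have "(u \<otimes>\<^bsub>UP R\<^esub> ?A) j \<in> J" using u(2) by (simp add: poly_ideal_def)
  then have "u j \<otimes> a \<in> J"
    using UP.const_mult_apply[OF a Sigma_set_carrier[OF u(1)]] a UP.apply_closed Sigma_set_carrier[OF u(1)]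
    by (simp add: m_comm)
  then show "a \<in> J" using ideal.I_Units_cancel[OF J j a] by simp
next
  assume "a \<in> J"
  then have "up_ring.monom (UP R) a 0 \<in> poly_ideal R J"
    using a additive_subgroup.zero_closed[OF ideal.axioms(1)[OF J]]
    by (simp add: poly_ideal_def UP.monom_apply)
  then show "nagata_const R a \<in> nagata_ext J"
    unfolding nagata_const_eq loc_ext_def using Frac.one_S by blast
qed

abbreviation "MX \<equiv> nagata_ext M"

lemma ideal_MX: "ideal MX RX"
  by (rule ideal_nagata_ext[OF M.is_ideal])

lemma one_notin_MX: "\<one>\<^bsub>RX\<^esub> \<notin> MX"
  using nagata_const_mem_nagata_ext_iff[OF M.is_ideal one_closed] one_notin_M
    ring_hom_one[OF nagata_const_ring_hom] by simp

lemma notin_MX_imp_Units: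
  assumes "x \<in> carrier RX" "x \<notin> MX"
  shows "x \<in> Units RX"
proof -
  obtain f s where fs: "x = Frac.fr f s" "f \<in> carrier (UP R)" "s \<in> Sigma_set R"
    using assms(1) by (rule Frac.carrier_localizationE)
  have "f \<notin> poly_ideal R M" using fs assms(2) unfolding loc_ext_def by blast
  then have "f \<in> Sigma_set R" using fs(2) Sigma_set_iff by simp
  then show ?thesis using Frac.frac_Units fs by simp
qed

lemma nagata_one_neq_zero: "\<one>\<^bsub>RX\<^esub> \<noteq> \<zero>\<^bsub>RX\<^esub>"
  using one_notin_MX additive_subgroup.zero_closed[OF ideal.axioms(1)[OF ideal_MX]] by auto

lemma nagata_map_expansion:
  assumes "p \<in> carrier (UP R)"
  shows "nagata_map R p
    = (\<Oplus>\<^bsub>RX\<^esub> i \<in> {..deg R p}. nagata_const R (p i) \<otimes>\<^bsub>RX\<^esub> nagata_map R (up_ring.monom (UP R) \<one> i))"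
proof -
  interpret h: ring_hom_ring "UP R" RX "loc_map (UP R) (Sigma_set R)"
    by (rule Frac.ring_hom_ring_loc_map)
  have monoms: "(\<lambda>i. up_ring.monom (UP R) (p i) 0 \<otimes>\<^bsub>UP R\<^esub> up_ring.monom (UP R) \<one> i) \<in> {..deg R p} \<rightarrow> carrier (UP R)"
    using UP.apply_closed[OF assms] by auto
  have "nagata_map R p
      = loc_map (UP R) (Sigma_set R) (\<Oplus>\<^bsub>UP R\<^esub> i \<in> {..deg R p}. up_ring.monom (UP R) (p i) 0 \<otimes>\<^bsub>UP R\<^esub> up_ring.monom (UP R) \<one> i)"
    using UP.poly_expansion[OF assms] by (simp add: nagata_map_def)
  also have "\<dots> = (\<Oplus>\<^bsub>RX\<^esub> i \<in> {..deg R p}. nagata_const R (p i) \<otimes>\<^bsub>RX\<^esub> nagata_map R (up_ring.monom (UP R) \<one> i))"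
    using UP.apply_closed[OF assms] monoms
    by (simp add: h.hom_finsum comp_def nagata_const_def nagata_map_def)
  finally show ?thesis .
qed

lemma primeideal_nagata_ext:
  assumes "primeideal q R"
  shows "primeideal (nagata_ext q) RX"
proof (rule Frac.primeideal_loc_ext[OF UP.primeideal_poly_ideal[OF assms]])
  have "q \<subseteq> M"
    using proper_ideal_subset_M primeideal.axioms(1)[OF assms] primeideal.I_notcarr[OF assms] by blast
  then have "poly_ideal R q \<subseteq> poly_ideal R M" by (auto simp: poly_ideal_def)
  then show "poly_ideal R q \<inter> Sigma_set R = {}" by (auto simp: Sigma_set_iff)
qed


lemma regular_elem_nagata_const_imp:
  assumes "\<rho> \<in> carrier R" "regular_elem RX (nagata_const R \<rho>)"
  shows "regular_elem R \<rho>"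
  unfolding regular_elem_def
proof (intro conjI ballI impI)
  fix x assume x: "x \<in> carrier R" "\<rho> \<otimes> x = \<zero>"
  then have "nagata_const R \<rho> \<otimes>\<^bsub>RX\<^esub> nagata_const R x = \<zero>\<^bsub>RX\<^esub>"
    using nagata_const_mult[OF assms(1) x(1)] ring_hom_zero[OF nagata_const_ring_hom ring_axioms RX.ring_axioms]
    by simp
  then have "nagata_const R x = \<zero>\<^bsub>RX\<^esub>"
    using assms(2) nagata_const_closed[OF x(1)] by (simp add: regular_elem_def)
  then have "nagata_const R x \<in> nagata_ext {\<zero>}"
    using additive_subgroup.zero_closed[OF ideal.axioms(1)[OF ideal_nagata_ext[OF zeroideal]]] by simp
  then show "x = \<zero>" using nagata_const_mem_nagata_ext_iff[OF zeroideal x(1)] by simp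
qed (rule assms(1))

lemma cgenideal_nagata_const_subset:
  assumes "\<rho> \<in> carrier R"
  shows "PIdl\<^bsub>RX\<^esub> (nagata_const R \<rho>) \<subseteq> nagata_ext (PIdl \<rho>)"
proof (rule RX.cgenideal_minimal[OF ideal_nagata_ext[OF cgenideal_ideal[OF assms]]])
  show "nagata_const R \<rho> \<in> nagata_ext (PIdl \<rho>)"
    using nagata_const_mem_nagata_ext_iff[OF cgenideal_ideal[OF assms] assms] cgenideal_self[OF assms] by blast
qed

text \<open>Comparability transfers because \<open>J \<mapsto> J(X)\<close> is injective on ideals of \<open>R\<close>.\<close>
lemma strong_divisor_nagata_const_imp:
  assumes \<rho>: "\<rho> \<in> carrier R" and sd: "strong_divisor RX (nagata_const R \<rho>)"
  shows "strong_divisor R \<rho>"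
proof -
  have "PIdl \<rho> \<subseteq> J \<or> J \<subseteq> PIdl \<rho>" if J: "ideal J R" for J
  proof (cases "PIdl\<^bsub>RX\<^esub> (nagata_const R \<rho>) \<subseteq> nagata_ext J")
    case True
    then have "\<rho> \<in> J"
      using RX.cgenideal_self[OF nagata_const_closed[OF \<rho>]] nagata_const_mem_nagata_ext_iff[OF J \<rho>] by blast
    then show ?thesis using cgenideal_minimal[OF J] by blast
  next
    case False
    then have "nagata_ext J \<subseteq> nagata_ext (PIdl \<rho>)"
      using sd ideal_nagata_ext[OF J] cgenideal_nagata_const_subset[OF \<rho>] by (auto simp: strong_divisor_def)
    then have "J \<subseteq> PIdl \<rho>"
      using nagata_const_mem_nagata_ext_iff[OF J] nagata_const_mem_nagata_ext_iff[OF cgenideal_ideal[OF \<rho>]]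
        ideal.Icarr[OF J] by blast
    then show ?thesis by blast
  qed
  then show ?thesis
    using regular_elem_nagata_const_imp[OF \<rho>] sd by (simp add: strong_divisor_def)
qed

lemma D_set_cgenideal: "\<rho> \<in> carrier R \<Longrightarrow> D_set R (PIdl \<rho>) = {q \<in> Spec R. \<rho> \<notin> q}"
  using cgenideal_subset_iff primeideal.axioms(1) by (auto simp: D_set_def Spec_def)

lemma nagata_loc_elem_contraction:
  assumes x: "x \<in> carrier RX" and \<rho>: "\<rho> \<in> carrier R"
    and x\<rho>: "PIdl\<^bsub>RX\<^esub> x = PIdl\<^bsub>RX\<^esub> (nagata_const R \<rho>)" and Q: "primeideal Q (loc_elem RX x)"
  shows "{a \<in> carrier R. loc_elem_map RX x (nagata_const R a) \<in> Q} \<in> D_set R (PIdl \<rho>)"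
proof -
  let ?Pw = "{x [^]\<^bsub>RX\<^esub> (n::nat) | n. True}"
  interpret Y: ring_of_fractions RX ?Pw by (rule RX.ring_of_fractions_powers[OF x])
  define Q' where "Q' = {b \<in> carrier RX. loc_map RX ?Pw b \<in> Q}"
  have Q': "primeideal Q' RX" "Q' \<inter> ?Pw = {}"
    using Y.primeideal_contraction Q by (simp_all add: Q'_def loc_elem_def)
  have q: "{a \<in> carrier R. loc_elem_map RX x (nagata_const R a) \<in> Q} = {a \<in> carrier R. nagata_const R a \<in> Q'}"
    using nagata_const_closed by (auto simp: Q'_def loc_elem_map_def)
  have "primeideal {a \<in> carrier R. nagata_const R a \<in> Q'} R"
    by (rule ring_hom_ring.primeideal_vimage[OF ring_hom_ringI2[OF ring_axioms RX.ring_axioms nagata_const_ring_hom]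
          is_cring Q'(1)])
  moreover have "nagata_const R \<rho> \<notin> Q'"
    using Q'(2) RX.mem_powers_self[OF x] RX.cgenideal_subset_iff[OF primeideal.axioms(1)[OF Q'(1)]]
      x nagata_const_closed[OF \<rho>] x\<rho> by blast
  ultimately show ?thesis unfolding q D_set_cgenideal[OF \<rho>] by (simp add: Spec_def)
qed

text \<open>A prime \<open>q\<close> avoiding \<open>\<rho>\<close> extends to the prime \<open>q(X)\<close> avoiding \<open>x\<close>, which extends further to
  \<open>R(X)\<^sub>x\<close>; both extensions contract back.\<close>
lemma D_set_subset_nagata_loc_elem_contractions:
  assumes x: "x \<in> carrier RX" and \<rho>: "\<rho> \<in> carrier R"
    and x\<rho>: "PIdl\<^bsub>RX\<^esub> x = PIdl\<^bsub>RX\<^esub> (nagata_const R \<rho>)" and q: "q \<in> D_set R (PIdl \<rho>)"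
  shows "\<exists>Q \<in> Spec (loc_elem RX x). q = {a \<in> carrier R. loc_elem_map RX x (nagata_const R a) \<in> Q}"
proof -
  let ?Pw = "{x [^]\<^bsub>RX\<^esub> (n::nat) | n. True}"
  interpret Y: ring_of_fractions RX ?Pw by (rule RX.ring_of_fractions_powers[OF x])
  have q: "primeideal q R" "\<rho> \<notin> q" using q D_set_cgenideal[OF \<rho>] by (auto simp: Spec_def)
  have Q1: "primeideal (nagata_ext q) RX" by (rule primeideal_nagata_ext[OF q(1)])
  have Q1_iff: "nagata_const R a \<in> nagata_ext q \<longleftrightarrow> a \<in> q" if "a \<in> carrier R" for a
    by (rule nagata_const_mem_nagata_ext_iff[OF primeideal.axioms(1)[OF q(1)] that])
  have "x \<notin> nagata_ext q"
    using RX.cgenideal_subset_iff[OF primeideal.axioms(1)[OF Q1]] x nagata_const_closed[OF \<rho>] x\<rho>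
      Q1_iff[OF \<rho>] q(2) by blast
  then have Q1_Pw: "nagata_ext q \<inter> ?Pw = {}" using RX.primeideal_nat_pow_notin[OF Q1 x] by auto
  have "loc_ext RX ?Pw (nagata_ext q) \<in> Spec (loc_elem RX x)"
    using Y.primeideal_loc_ext[OF Q1 Q1_Pw] by (simp add: Spec_def loc_elem_def)
  moreover have "q = {a \<in> carrier R. loc_elem_map RX x (nagata_const R a) \<in> loc_ext RX ?Pw (nagata_ext q)}"
    using Y.loc_ext_contraction[OF Q1 Q1_Pw] Q1_iff nagata_const_closed
      ideal.Icarr[OF primeideal.axioms(1)[OF q(1)]]
    unfolding loc_elem_map_def by blast
  ultimately show ?thesis by blast
qed

lemma nagata_loc_elem_spec_image:
  assumes "x \<in> carrier RX" "\<rho> \<in> carrier R" "PIdl\<^bsub>RX\<^esub> x = PIdl\<^bsub>RX\<^esub> (nagata_const R \<rho>)"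
  shows "{{a \<in> carrier R. loc_elem_map RX x (nagata_const R a) \<in> Q} | Q. Q \<in> Spec (loc_elem RX x)}
    = D_set R (PIdl \<rho>)"
  using nagata_loc_elem_contraction[OF assms] D_set_subset_nagata_loc_elem_contractions[OF assms]
  by (auto simp: Spec_def)

end

section \<open>Strong divisors of \<open>R(X)\<close> of the form \<open>p/1\<close>\<close>

locale nagata_strong_divisor = local_cring +
  fixes p
  assumes p_carrier: "p \<in> carrier (UP R)"
    and strong_divisor_P: "strong_divisor (nagata R) (nagata_map R p)"
begin

abbreviation "P \<equiv> nagata_map R p"
abbreviation "nc \<equiv> nagata_const R"

lemma P_closed: "P \<in> carrier RX"
  using Frac.frac_closed[OF p_carrier Frac.one_S] by (simp add: nagata_map_eq)

lemma strong_divisor_RX_P: "strong_divisor RX P"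
  using strong_divisor_P by (simp add: nagata_def)

lemma P_regular: "\<lbrakk>x \<in> carrier RX; P \<otimes>\<^bsub>RX\<^esub> x = \<zero>\<^bsub>RX\<^esub>\<rbrakk> \<Longrightarrow> x = \<zero>\<^bsub>RX\<^esub>"
  using strong_divisor_RX_P by (simp add: strong_divisor_def regular_elem_def)

lemma P_neq_zero: "P \<noteq> \<zero>\<^bsub>RX\<^esub>"
  using P_regular[OF RX.one_closed] P_closed nagata_one_neq_zero by auto

lemma coeff_mem_content_ideal: "i \<le> deg R p \<Longrightarrow> p i \<in> content_ideal R p"
  using genideal_self[of "{p i | i. i \<le> deg R p}"] UP.apply_closed[OF p_carrier]
  by (auto simp: content_ideal_def)

lemma content_ideal_ideal: "ideal (content_ideal R p) R"
  unfolding content_ideal_def by (rule genideal_ideal) (use UP.apply_closed[OF p_carrier] in blast)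

text \<open>Then \<open>P = (\<Sum>v i X\<^sup>i) P\<close>, so \<open>\<Sum>v i X\<^sup>i = 1 \<notin> M(X)\<close> as \<open>P\<close> is regular.\<close>
lemma coeff_multiples_of_P_imp_Units:
  assumes v: "\<And>i. i \<le> deg R p \<Longrightarrow> v i \<in> carrier RX \<and> nc (p i) = v i \<otimes>\<^bsub>RX\<^esub> P"
  shows "\<exists>i \<le> deg R p. v i \<in> Units RX"
proof -
  define mono where "mono = (\<lambda>i. nagata_map R (up_ring.monom (UP R) \<one> i))"
  have mono_closed: "\<And>i. mono i \<in> carrier RX"
    unfolding mono_def nagata_map_eq using Frac.frac_closed UP.monom_closed Frac.one_S by auto
  define S where "S = (\<Oplus>\<^bsub>RX\<^esub> i \<in> {..deg R p}. v i \<otimes>\<^bsub>RX\<^esub> mono i)"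
  have S: "S \<in> carrier RX" unfolding S_def using v mono_closed by auto
  have "P = (\<Oplus>\<^bsub>RX\<^esub> i \<in> {..deg R p}. nc (p i) \<otimes>\<^bsub>RX\<^esub> mono i)"
    using nagata_map_expansion[OF p_carrier] unfolding mono_def .
  also have "\<dots> = (\<Oplus>\<^bsub>RX\<^esub> i \<in> {..deg R p}. (v i \<otimes>\<^bsub>RX\<^esub> mono i) \<otimes>\<^bsub>RX\<^esub> P)"
    using v mono_closed P_closed by (intro RX.finsum_cong') (auto simp: RX.m_ac)
  also have "\<dots> = S \<otimes>\<^bsub>RX\<^esub> P"
    unfolding S_def by (rule RX.finsum_ldistr[symmetric]) (use v mono_closed P_closed in auto)
  finally have "S \<otimes>\<^bsub>RX\<^esub> P = P" by simp
  moreover have "regular_elem RX P" using strong_divisor_RX_P by (simp add: strong_divisor_def)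
  ultimately have "S = \<one>\<^bsub>RX\<^esub>" using RX.regular_elem_mult_eq_self[OF _ S] by blast
  moreover have "S \<in> MX" if "\<forall>i \<le> deg R p. v i \<in> MX"
    unfolding S_def
    by (rule ideal.I_finsum_closed[OF ideal_MX]) (use that mono_closed in \<open>auto intro: ideal.I_r_closed[OF ideal_MX]\<close>)
  ultimately show ?thesis using one_notin_MX notin_MX_imp_Units v by blast
qed

lemma exists_coeff_dividing_P: "\<exists>k \<le> deg R p. P \<in> PIdl\<^bsub>RX\<^esub> (nc (p k))"
proof (rule ccontr)
  assume none: "\<not> (\<exists>k \<le> deg R p. P \<in> PIdl\<^bsub>RX\<^esub> (nc (p k)))"
  have "\<exists>v. v \<in> carrier RX \<and> nc (p i) = v \<otimes>\<^bsub>RX\<^esub> P" if i: "i \<le> deg R p" for i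
  proof -
    have ncc: "nc (p i) \<in> carrier RX" using nagata_const_closed UP.apply_closed[OF p_carrier] by auto
    have "PIdl\<^bsub>RX\<^esub> P \<subseteq> PIdl\<^bsub>RX\<^esub> (nc (p i)) \<or> PIdl\<^bsub>RX\<^esub> (nc (p i)) \<subseteq> PIdl\<^bsub>RX\<^esub> P"
      using strong_divisor_RX_P RX.cgenideal_ideal[OF ncc] by (simp add: strong_divisor_def)
    moreover have "P \<notin> PIdl\<^bsub>RX\<^esub> (nc (p i))" using none i by auto
    ultimately have "nc (p i) \<in> PIdl\<^bsub>RX\<^esub> P" using RX.cgenideal_self[OF ncc] RX.cgenideal_self[OF P_closed] by blast
    then show ?thesis by (auto simp: cgenideal_def)
  qed
  then obtain v where v: "\<And>i. i \<le> deg R p \<Longrightarrow> v i \<in> carrier RX \<and> nc (p i) = v i \<otimes>\<^bsub>RX\<^esub> P"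
    by metis
  then obtain i where i: "i \<le> deg R p" "v i \<in> Units RX" using coeff_multiples_of_P_imp_Units by blast
  then have "P = inv\<^bsub>RX\<^esub> (v i) \<otimes>\<^bsub>RX\<^esub> nc (p i)"
    using v[OF i(1)] P_closed by (simp add: RX.m_assoc[symmetric] RX.Units_closed)
  then have "P \<in> PIdl\<^bsub>RX\<^esub> (nc (p i))" using i(2) by (auto simp: cgenideal_def)
  then show False using none i(1) by auto
qed

text \<open>Clearing denominators in \<open>P = (g/s) \<cdot> a\<close> gives \<open>t p = a h\<close> in \<open>R[X]\<close> with \<open>t = u s \<in> \<Sigma>\<close>, \<open>h = u g\<close>.\<close>
lemma P_eq_mult_nagata_constE:
  assumes a: "a \<in> carrier R" and y: "y \<in> carrier RX" and P: "P = y \<otimes>\<^bsub>RX\<^esub> nc a"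
  obtains g s u where "y = Frac.fr g s" "g \<in> carrier (UP R)" "s \<in> Sigma_set R" "u \<in> Sigma_set R"
    "\<And>N. ((u \<otimes>\<^bsub>UP R\<^esub> s) \<otimes>\<^bsub>UP R\<^esub> p) N = a \<otimes> (u \<otimes>\<^bsub>UP R\<^esub> g) N"
proof -
  let ?A = "up_ring.monom (UP R) a 0"
  have A: "?A \<in> carrier (UP R)" using UP.monom_closed[OF a] .
  obtain g s where gs: "y = Frac.fr g s" "g \<in> carrier (UP R)" "s \<in> Sigma_set R"
    using y by (rule Frac.carrier_localizationE)
  have s: "s \<in> carrier (UP R)" using gs(3) Sigma_set_carrier by blast
  have "Frac.fr p \<one>\<^bsub>UP R\<^esub> = Frac.fr (g \<otimes>\<^bsub>UP R\<^esub> ?A) s"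
    using P gs A s Frac.one_S by (simp add: nagata_map_eq nagata_const_eq Frac.mult_frac)
  then obtain u where u: "u \<in> Sigma_set R"
    "u \<otimes>\<^bsub>UP R\<^esub> ((p \<otimes>\<^bsub>UP R\<^esub> s) \<ominus>\<^bsub>UP R\<^esub> ((g \<otimes>\<^bsub>UP R\<^esub> ?A) \<otimes>\<^bsub>UP R\<^esub> \<one>\<^bsub>UP R\<^esub>)) = \<zero>\<^bsub>UP R\<^esub>"
    using Frac.frac_eq_iff p_carrier Frac.one_S gs A by auto
  have uc: "u \<in> carrier (UP R)" using u(1) Sigma_set_carrier by blast
  have "(u \<otimes>\<^bsub>UP R\<^esub> s) \<otimes>\<^bsub>UP R\<^esub> p
      = u \<otimes>\<^bsub>UP R\<^esub> ((p \<otimes>\<^bsub>UP R\<^esub> s) \<ominus>\<^bsub>UP R\<^esub> ((g \<otimes>\<^bsub>UP R\<^esub> ?A) \<otimes>\<^bsub>UP R\<^esub> \<one>\<^bsub>UP R\<^esub>))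
        \<oplus>\<^bsub>UP R\<^esub> (u \<otimes>\<^bsub>UP R\<^esub> g) \<otimes>\<^bsub>UP R\<^esub> ?A"
    using uc s gs(2) A p_carrier by algebra
  also have "\<dots> = (u \<otimes>\<^bsub>UP R\<^esub> g) \<otimes>\<^bsub>UP R\<^esub> ?A" using u(2) uc gs(2) A by simp
  finally have "\<And>N. ((u \<otimes>\<^bsub>UP R\<^esub> s) \<otimes>\<^bsub>UP R\<^esub> p) N = a \<otimes> (u \<otimes>\<^bsub>UP R\<^esub> g) N"
    using UP.const_mult_apply[OF a] uc gs(2) by simp
  then show ?thesis using that gs u(1) by blast
qed

lemma content_ideal_eq_if_Sigma_mult:
  assumes k: "k \<le> deg R p" and t: "t \<in> Sigma_set R" and h: "h \<in> carrier (UP R)"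
    and tp: "\<And>N. (t \<otimes>\<^bsub>UP R\<^esub> p) N = p k \<otimes> h N"
  shows "content_ideal R p = PIdl (p k)"
proof
  have a: "p k \<in> carrier R" using UP.apply_closed[OF p_carrier] .
  have "(t \<otimes>\<^bsub>UP R\<^esub> p) N \<in> PIdl (p k)" for N
    unfolding tp using UP.apply_closed[OF h, of N] a m_comm by (auto simp: cgenideal_def)
  then have "p i \<in> PIdl (p k)" for i
    by (rule Sigma_mult_coeffs_in_ideal[OF cgenideal_ideal[OF a] t p_carrier])
  then show "content_ideal R p \<subseteq> PIdl (p k)"
    unfolding content_ideal_def by (intro genideal_minimal[OF cgenideal_ideal[OF a]]) blast
  show "PIdl (p k) \<subseteq> content_ideal R p"
    by (rule cgenideal_minimal[OF content_ideal_ideal coeff_mem_content_ideal[OF k]])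
qed

text \<open>If \<open>h\<close> had all coefficients in \<open>M\<close>, the content formula would give \<open>p k \<in> p k M\<close>,
  hence \<open>p k = 0\<close> by Nakayama and then \<open>p = 0\<close>.\<close>
lemma Sigma_mult_factor_notin_poly_ideal_M:
  assumes k: "k \<le> deg R p" and t: "t \<in> Sigma_set R" and h: "h \<in> carrier (UP R)"
    and tp: "\<And>N. (t \<otimes>\<^bsub>UP R\<^esub> p) N = p k \<otimes> h N"
  shows "h \<notin> poly_ideal R M"
proof
  assume "h \<in> poly_ideal R M"
  then have "(t \<otimes>\<^bsub>UP R\<^esub> p) N \<in> {p k \<otimes> r | r. r \<in> M}" for N
    unfolding tp by (auto simp: poly_ideal_def)
  then have "p k \<in> {p k \<otimes> r | r. r \<in> M}"
    by (rule Sigma_mult_coeffs_in_ideal[OF ideal_mult_left[OF M.is_ideal UP.apply_closed[OF p_carrier]] t p_carrier])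
  then have "p k = \<zero>" using eq_mult_M_imp_zero[OF UP.apply_closed[OF p_carrier]] by auto
  then have "p i = \<zero>" for i
    using content_ideal_eq_if_Sigma_mult[OF assms] coeff_mem_content_ideal UP.apply_above_deg[OF p_carrier]
    by (cases "i \<le> deg R p") (auto simp: cgenideal_def)
  then have "p = \<zero>\<^bsub>UP R\<^esub>" by (simp add: fun_eq_iff UP.zero_apply)
  then show False using P_neq_zero by (simp add: nagata_map_eq Frac.zero_localization)
qed

lemma content_ideal_eq_coeff_if_P_dvd:
  assumes k: "k \<le> deg R p" and dvd: "P \<in> PIdl\<^bsub>RX\<^esub> (nc (p k))"
  shows "content_ideal R p = PIdl (p k)" and "\<exists>w\<in>Units RX. P = w \<otimes>\<^bsub>RX\<^esub> nc (p k)"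
proof -
  obtain y where y: "y \<in> carrier RX" "P = y \<otimes>\<^bsub>RX\<^esub> nc (p k)"
    using dvd by (auto simp: cgenideal_def)
  obtain g s u where gsu: "y = Frac.fr g s" "g \<in> carrier (UP R)" "s \<in> Sigma_set R" "u \<in> Sigma_set R"
    and tp: "\<And>N. ((u \<otimes>\<^bsub>UP R\<^esub> s) \<otimes>\<^bsub>UP R\<^esub> p) N = p k \<otimes> (u \<otimes>\<^bsub>UP R\<^esub> g) N"
    by (rule P_eq_mult_nagata_constE[OF UP.apply_closed[OF p_carrier] y]) blast
  have t: "u \<otimes>\<^bsub>UP R\<^esub> s \<in> Sigma_set R" using gsu Frac.mult_S by blast
  have h: "u \<otimes>\<^bsub>UP R\<^esub> g \<in> carrier (UP R)" using gsu Sigma_set_carrier by blast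
  show "content_ideal R p = PIdl (p k)" by (rule content_ideal_eq_if_Sigma_mult[OF k t h tp])
  have "u \<otimes>\<^bsub>UP R\<^esub> g \<notin> poly_ideal R M" by (rule Sigma_mult_factor_notin_poly_ideal_M[OF k t h tp])
  then have "g \<in> Sigma_set R"
    using gsu(2,4) Sigma_set_carrier ideal.I_l_closed[OF UP.ideal_poly_ideal[OF M.is_ideal]]
    by (auto simp: Sigma_set_iff)
  then have "y \<in> Units RX" using gsu Frac.frac_Units by simp
  then show "\<exists>w\<in>Units RX. P = w \<otimes>\<^bsub>RX\<^esub> nc (p k)" using y by blast
qed

lemma content_ideal_principal:
  obtains \<rho> where "\<rho> \<in> carrier R" "content_ideal R p = PIdl \<rho>"
    "PIdl\<^bsub>RX\<^esub> P = PIdl\<^bsub>RX\<^esub> (nc \<rho>)"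
proof -
  obtain k where k: "k \<le> deg R p" "P \<in> PIdl\<^bsub>RX\<^esub> (nc (p k))" using exists_coeff_dividing_P by blast
  obtain w where "w \<in> Units RX" "P = w \<otimes>\<^bsub>RX\<^esub> nc (p k)" using content_ideal_eq_coeff_if_P_dvd(2)[OF k] by blast
  then have "PIdl\<^bsub>RX\<^esub> P = PIdl\<^bsub>RX\<^esub> (nc (p k))"
    using RX.cgenideal_Units_mult nagata_const_closed UP.apply_closed[OF p_carrier] by simp
  then show ?thesis
    using that UP.apply_closed[OF p_carrier] content_ideal_eq_coeff_if_P_dvd(1)[OF k] by blast
qed

lemma genideal_nagata_const_content_ideal: "Idl\<^bsub>RX\<^esub> (nc ` content_ideal R p) = PIdl\<^bsub>RX\<^esub> P"
proof -
  obtain \<rho> where "\<rho> \<in> carrier R" "content_ideal R p = PIdl \<rho>" "PIdl\<^bsub>RX\<^esub> P = PIdl\<^bsub>RX\<^esub> (nc \<rho>)"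
    by (rule content_ideal_principal)
  then show ?thesis using genideal_image_cgenideal[OF is_cring RX.is_cring nagata_const_ring_hom] by simp
qed

lemma content_ideal_strong_divisor:
  "\<exists>\<rho>. strong_divisor R \<rho> \<and> content_ideal R p = PIdl \<rho> \<and> equiv_elem RX P (nc \<rho>)"
proof -
  obtain \<rho> where \<rho>: "\<rho> \<in> carrier R" "content_ideal R p = PIdl \<rho>" "PIdl\<^bsub>RX\<^esub> P = PIdl\<^bsub>RX\<^esub> (nc \<rho>)"
    by (rule content_ideal_principal)
  have "strong_divisor RX (nc \<rho>)"
    by (rule RX.strong_divisor_cgenideal_cong[OF P_closed nagata_const_closed[OF \<rho>(1)] \<rho>(3) strong_divisor_RX_P])
  then have "strong_divisor R \<rho>" by (rule strong_divisor_nagata_const_imp[OF \<rho>(1)])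
  moreover have "equiv_elem RX P (nc \<rho>)"
    by (rule RX.equiv_elem_cgenideal_cong[OF P_closed nagata_const_closed[OF \<rho>(1)] \<rho>(3)])
  ultimately show ?thesis using \<rho>(2) by blast
qed

lemma spec_loc_elem_P_image:
  "{{a \<in> carrier R. loc_elem_map RX P (nc a) \<in> Q} | Q. Q \<in> Spec (loc_elem RX P)} = D_set R (content_ideal R p)"
proof -
  obtain \<rho> where \<rho>: "\<rho> \<in> carrier R" "content_ideal R p = PIdl \<rho>" "PIdl\<^bsub>RX\<^esub> P = PIdl\<^bsub>RX\<^esub> (nc \<rho>)"
    by (rule content_ideal_principal)
  show ?thesis unfolding \<rho>(2) by (rule nagata_loc_elem_spec_image[OF P_closed \<rho>(1,3)])
qed

end

theorem mainTheorem15: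
  fixes R :: "'a ring" and p :: "nat \<Rightarrow> 'a"
  defines "RX \<equiv> nagata R"
      and "P \<equiv> nagata_map R p"
      and "I \<equiv> content_ideal R p"
  assumes "local_ring R"
      and "p \<in> carrier (UP R)"
      and "strong_divisor RX P"
      and "P \<notin> Units RX"
  shows "Idl\<^bsub>RX\<^esub> (nagata_const R ` I) = PIdl\<^bsub>RX\<^esub> P
       \<and> (\<exists>\<rho>. strong_divisor R \<rho> \<and> I = PIdl\<^bsub>R\<^esub> \<rho> \<and> equiv_elem RX P (nagata_const R \<rho>))
       \<and> (\<forall>i \<le> deg R p. P \<in> PIdl\<^bsub>RX\<^esub> (nagata_const R (p i)) \<longrightarrow> I = PIdl\<^bsub>R\<^esub> (p i))
       \<and> { {a \<in> carrier R. loc_elem_map RX P (nagata_const R a) \<in> Q} | Q. Q \<in> Spec (loc_elem RX P) }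
           = D_set R I"
proof -
  obtain M where "local_cring R M" using local_ring_imp_local_cring[OF assms(4)] .
  then interpret nagata_strong_divisor R M p
    using assms(5,6) by (simp add: nagata_strong_divisor_def nagata_strong_divisor_axioms_def RX_def P_def)
  show ?thesis
    unfolding RX_def P_def I_def nagata_def
    using genideal_nagata_const_content_ideal content_ideal_strong_divisor
      content_ideal_eq_coeff_if_P_dvd(1) spec_loc_elem_P_image
    by blast
qed

end
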